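(* Consider a general state space model as described in the context, with observations $y_1,y_2,\dots$ held fixed, and the i.i.d. Monte Carlo filter $f^N_{t|t}$. Assume that the transition densities do not depend on $t$, $a_t=a$ for all $t\ge1$, that $x\mapsto a(x,\cdot)$ is continuous into $L_1(\mu)$, that there exist a probability density $h$ and constants $0<c_a\le C_a<\infty$ with $$c_a h(x)\le a(x',x)\le C_a h(x)\quad\text{for all }x,x',$$ and that the observation densities are positive and satisfy $$C_b:=\sup_{t,x,x',y}\frac{b_t(x,y)}{b_t(x',y)}<\infty .$$ Then for every $\varepsilon>0$ there are constants $c_1,c_2$ such that for all $t$ and all $N$, $$\mathbf P\big[\|f^N_{t|t}-f_{t|t}\|_1>\varepsilon\big]\le c_1\exp(-c_2N).$$
   Context: State space model: the state space $E$ is a complete separable metric space with Borel $\sigma$-field and a reference measure $\mu$; observation space with measure $\nu$. $(X_t)$ is a Markov chain with $X_0\sim a_0\,d\mu$ and $X_t\mid X_{t-1}=x'\sim a_t(x',x)\,d\mu(x)$; conditionally on $(X_t)$ the $Y_t$ are independent with $Y_t\mid X_t=x\sim b_t(x,y)\,d\nu(y)$. With observations $y_1,y_2,\dots$ fixed, $f_{t|t}$ is the conditional density of $X_t$ given $Y_{1:t}=y_{1:t}$: $f_{0|0}=a_0$, $f_{t|t}(x)\propto b_t(x,y_t)\int f_{t-1|t-1}(x')a_t(x',x)\,d\mu(x')$. Monte Carlo filter: $x_{1,0},\dots,x_{N,0}$ i.i.d. from $f^N_{0|0}=a_0$; given the particles up to time $t-1$, $x_{1,t},\dots,x_{N,t}$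 are i.i.d. from $f^N_{t|t}(x)\propto b_t(x,y_t)\frac1N\sum_{j=1}^N a_t(x_{j,t-1},x)$. $\|\cdot\|_1$ is the $L_1(\mu)$ norm; probabilities refer only to the Monte Carlo randomness. *)

theory Defs
  imports "HOL-Probability.Probability"
begin

primrec opt_filter ::
  "'a measure \<Rightarrow> ('a \<Rightarrow> real) \<Rightarrow> ('a \<Rightarrow> 'a \<Rightarrow> real) \<Rightarrow>
   (nat \<Rightarrow> 'a \<Rightarrow> 'b \<Rightarrow> real) \<Rightarrow> (nat \<Rightarrow> 'b) \<Rightarrow> nat \<Rightarrow> 'a \<Rightarrow> real" where
  "opt_filter mu a0 a b y 0 = a0"
| "opt_filter mu a0 a b y (Suc t) =
     (let g = (\<lambda>x. b (Suc t) x (y (Suc t)) *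
                    (\<integral>x'. opt_filter mu a0 a b y t x' * a x' x \<partial>mu))
      in (\<lambda>x. g x / (\<integral>z. g z \<partial>mu)))"

text \<open>Monte Carlo filter density f^N_{t|t}, as a function of the particle cloud
  xs 0, ..., xs (N-1) at time t-1 (for t = 0 it is a0).\<close>
definition mc_filter ::
  "'a measure \<Rightarrow> ('a \<Rightarrow> real) \<Rightarrow> ('a \<Rightarrow> 'a \<Rightarrow> real) \<Rightarrow>
   (nat \<Rightarrow> 'a \<Rightarrow> 'b \<Rightarrow> real) \<Rightarrow> (nat \<Rightarrow> 'b) \<Rightarrow> nat \<Rightarrow> nat \<Rightarrow> (nat \<Rightarrow> 'a) \<Rightarrow> 'a \<Rightarrow> real" where
  "mc_filter mu a0 a b y N t xs =
     (case t of 0 \<Rightarrow> a0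
      | Suc s \<Rightarrow>
         (let g = (\<lambda>x. b (Suc s) x (y (Suc s)) * ((\<Sum>j<N. a (xs j) x) / real N))
          in (\<lambda>x. g x / (\<integral>z. g z \<partial>mu))))"

text \<open>Joint law of the particle cloud (x_{1,t},...,x_{N,t}) (indexed 0..N-1):
  i.i.d. from a0 at time 0; given the cloud at time t, i.i.d. from f^N_{t+1|t+1}.\<close>
primrec mc_particles ::
  "'a measure \<Rightarrow> ('a \<Rightarrow> real) \<Rightarrow> ('a \<Rightarrow> 'a \<Rightarrow> real) \<Rightarrow>
   (nat \<Rightarrow> 'a \<Rightarrow> 'b \<Rightarrow> real) \<Rightarrow> (nat \<Rightarrow> 'b) \<Rightarrow> nat \<Rightarrow> nat \<Rightarrow> (nat \<Rightarrow> 'a) measure" where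
  "mc_particles mu a0 a b y N 0 =
     PiM {..<N} (\<lambda>_. density mu (\<lambda>x. ennreal (a0 x)))"
| "mc_particles mu a0 a b y N (Suc t) =
     bind (mc_particles mu a0 a b y N t)
       (\<lambda>xs. PiM {..<N} (\<lambda>_. density mu (\<lambda>x. ennreal (mc_filter mu a0 a b y N (Suc t) xs x))))"

text \<open>P[ ||f^N_{t|t} - f_{t|t}||_1 > eps ]: f^N_{t|t} is a function of the cloud at
  time t-1 (for t = 0 it is deterministic).\<close>
definition mc_error_prob ::
  "'a measure \<Rightarrow> ('a \<Rightarrow> real) \<Rightarrow> ('a \<Rightarrow> 'a \<Rightarrow> real) \<Rightarrow>
   (nat \<Rightarrow> 'a \<Rightarrow> 'b \<Rightarrow> real) \<Rightarrow> (nat \<Rightarrow> 'b) \<Rightarrow> nat \<Rightarrow> nat \<Rightarrow> real \<Rightarrow> real" where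
  "mc_error_prob mu a0 a b y N t eps =
     measure (mc_particles mu a0 a b y N (t - 1))
       {xs \<in> space (mc_particles mu a0 a b y N (t - 1)).
          (\<integral>\<^sup>+ x. ennreal \<bar>mc_filter mu a0 a b y N t xs x - opt_filter mu a0 a b y t x\<bar> \<partial>mu)
            > ennreal eps}"

end

theory Submission
  imports Defs
begin

text \<open>The exact filter step is a prediction with the kernel \<open>a\<close> followed by a Bayes correction
  with the likelihood \<open>b\<^sub>t\<close>. Since every \<open>a(x', \<cdot>)\<close> lies between \<open>ca * h\<close> and \<open>Ca * h\<close>, the
  prediction contracts the Hilbert projective distance of two densities by the factor
  \<open>1 - ca/Ca\<close> (Birkhoff) and the correction does not increase it, so two filters started from
  arbitrary densities are \<open>(Ca\<^sup>2/ca\<^sup>2 - 1)(1 - ca/Ca)\<^sup>k\<close>-close in \<open>L\<^sub>1\<close> after \<open>k + 1\<close> steps.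
  Each step is moreover \<open>L\<^sub>1\<close>-Lipschitz with constant \<open>lip = 2 Cb\<^sup>2 Ca / ca\<close>.

  A Monte Carlo step differs from the exact one only in that the predicted density is replaced by
  the empirical mixture \<open>N\<^sup>-\<^sup>1 \<Sum>\<^sub>j a(x\<^sub>j, \<cdot>)\<close>. Hoeffding's inequality at each point, integrated
  against \<open>h\<close>, shows that this mixture is \<open>d\<close>-close in \<open>L\<^sub>1\<close> except with probability
  \<open>O(exp(-N d\<^sup>2 / (2 Ca\<^sup>2)))\<close>, conditionally on the past particles. Telescoping, the error at
  time \<open>t\<close> is at most the forgetting term for the steps before \<open>t - k - 1\<close> plus the Monte Carlo
  errors of the last \<open>k + 1\<close> steps, each amplified by at most \<open>lip\<^sup>k\<close>. Taking \<open>k\<close> with forgetting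
  term below \<open>\<epsilon>/2\<close> and \<open>d\<close> of order \<open>\<epsilon> / ((k + 1) lip\<^sup>k)\<close>, a union bound over these
  \<open>k + 1\<close> steps gives \<open>c\<^sub>1 exp(-c\<^sub>2 N)\<close> uniformly in \<open>t\<close>.\<close>

lemma abs_integral_le_integral:
  fixes f g :: "_ \<Rightarrow> real"
  assumes "integrable M f" "integrable M g" "\<And>x. x \<in> space M \<Longrightarrow> \<bar>f x\<bar> \<le> g x"
  shows "\<bar>\<integral>x. f x \<partial>M\<bar> \<le> (\<integral>x. g x \<partial>M)"
proof -
  have "\<bar>\<integral>x. f x \<partial>M\<bar> \<le> (\<integral>x. \<bar>f x\<bar> \<partial>M)" by (rule integral_abs_bound)
  also have "\<dots> \<le> (\<integral>x. g x \<partial>M)" using assms by (intro integral_mono) auto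
  finally show ?thesis .
qed

lemma prob_space_density_real:
  fixes p :: "'a \<Rightarrow> real"
  assumes "p \<in> borel_measurable M" "\<And>x. 0 \<le> p x" "integrable M p" "(\<integral>x. p x \<partial>M) = 1"
  shows "prob_space (density M (\<lambda>x. ennreal (p x)))"
proof (rule prob_spaceI)
  have "emeasure (density M (\<lambda>x. ennreal (p x))) (space M) = (\<integral>\<^sup>+x. ennreal (p x) \<partial>M)"
    using assms(1) by (simp add: emeasure_density)
  also have "\<dots> = ennreal (\<integral>x. p x \<partial>M)"
    using assms(2,3) by (intro nn_integral_eq_integral) auto
  finally show "emeasure (density M (\<lambda>x. ennreal (p x))) (space (density M (\<lambda>x. ennreal (p x)))) = 1"
    using assms(4) by simp
qed

lemma sets_PiM_density: "sets (PiM I (\<lambda>_. density M f)) = sets (PiM I (\<lambda>_. M))"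
  by (rule sets_PiM_cong) auto

lemma space_PiM_density: "space (PiM I (\<lambda>_. density M f)) = space (PiM I (\<lambda>_. M))"
  by (rule sets_eq_imp_space_eq[OF sets_PiM_density])

lemma indep_vars_PiM_components:
  assumes M: "\<And>i. i \<in> I \<Longrightarrow> prob_space (M i)" and I: "I \<noteq> {}"
  shows "prob_space.indep_vars (PiM I M) M (\<lambda>i c. c i) I"
proof -
  interpret P: prob_space "PiM I M" by (rule prob_space_PiM[OF M])
  have "distr (PiM I M) (PiM I M) (\<lambda>x. \<lambda>i\<in>I. x i) = distr (PiM I M) (PiM I M) (\<lambda>x. x)"
    by (rule distr_cong) (auto simp: space_PiM PiE_def extensional_restrict)
  also have "\<dots> = PiM I M" by (rule distr_id)
  also have "\<dots> = PiM I (\<lambda>i. distr (PiM I M) (M i) (\<lambda>c. c i))"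
  proof (rule PiM_cong)
    fix i assume "i \<in> I"
    then show "M i = distr (PiM I M) (M i) (\<lambda>c. c i)"
      using distr_PiM_component[of I M i, OF M] by simp
  qed simp
  finally show ?thesis
    by (subst P.indep_vars_iff_distr_eq_PiM'[OF I]) auto
qed

lemma nn_integral_section_mass_le:
  fixes h :: "'b \<Rightarrow> real"
  assumes P: "prob_space P" and mu: "sigma_finite_measure mu"
    and D: "D \<in> sets (P \<Otimes>\<^sub>M mu)" and h: "h \<in> borel_measurable mu" "\<And>z. 0 \<le> h z"
    and sections: "\<And>z. z \<in> space mu \<Longrightarrow> measure P {c \<in> space P. (c, z) \<in> D} \<le> g"
  shows "(\<integral>\<^sup>+c. (\<integral>\<^sup>+z. ennreal (h z * indicator D (c, z)) \<partial>mu) \<partial>P)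
           \<le> ennreal g * (\<integral>\<^sup>+z. ennreal (h z) \<partial>mu)"
proof -
  interpret P: prob_space P by (rule P)
  interpret PM: pair_sigma_finite P mu
    by (intro pair_sigma_finite.intro P.sigma_finite_measure_axioms mu)
  note [measurable] = h(1) D
  have section_le: "(\<integral>\<^sup>+c. ennreal (h z * indicator D (c, z)) \<partial>P) \<le> ennreal g * ennreal (h z)"
    if z: "z \<in> space mu" for z
  proof -
    let ?Dz = "{c \<in> space P. (c, z) \<in> D}"
    have "(\<lambda>c. (c, z)) -` D \<inter> space P \<in> sets P" using sets_Pair2[OF D] by auto
    moreover have "?Dz = (\<lambda>c. (c, z)) -` D \<inter> space P" by auto
    ultimately have Dz: "?Dz \<in> sets P" by simp
    have "(\<integral>\<^sup>+c. ennreal (h z * indicator D (c, z)) \<partial>P) = (\<integral>\<^sup>+c. ennreal (h z) * indicator ?Dz c \<partial>P)"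
      using h(2) by (intro nn_integral_cong) (auto simp: indicator_def)
    also have "\<dots> = ennreal (h z) * ennreal (measure P ?Dz)"
      using Dz by (simp add: nn_integral_cmult_indicator P.emeasure_eq_measure)
    also have "\<dots> \<le> ennreal (h z) * ennreal g"
      using sections[OF z] by (intro mult_left_mono ennreal_leI) auto
    finally show ?thesis by (simp add: mult.commute)
  qed
  have "(\<lambda>w. ennreal (h (snd w) * indicator D w)) \<in> borel_measurable (P \<Otimes>\<^sub>M mu)"
    by measurable
  then have "(\<integral>\<^sup>+c. (\<integral>\<^sup>+z. ennreal (h z * indicator D (c, z)) \<partial>mu) \<partial>P)
      = (\<integral>\<^sup>+z. (\<integral>\<^sup>+c. ennreal (h z * indicator D (c, z)) \<partial>P) \<partial>mu)"
    using PM.Fubini'[of "\<lambda>c z. ennreal (h z * indicator D (c, z))"] by (simp add: case_prod_beta')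
  also have "\<dots> \<le> (\<integral>\<^sup>+z. ennreal g * ennreal (h z) \<partial>mu)"
    using section_le by (intro nn_integral_mono) auto
  finally show ?thesis by (simp add: nn_integral_cmult)
qed

text \<open>Markov's inequality for the \<open>h\<close>-mass of the sections of \<open>D\<close>, whose expectation is at
  most \<open>g\<close> by Fubini.\<close>

lemma measure_section_mass_ge_le:
  fixes h :: "'b \<Rightarrow> real"
  assumes P: "prob_space P" and mu: "sigma_finite_measure mu"
    and D: "D \<in> sets (P \<Otimes>\<^sub>M mu)"
    and h: "h \<in> borel_measurable mu" "\<And>z. 0 \<le> h z" "integrable mu h" "(\<integral>z. h z \<partial>mu) = 1"
    and sections: "\<And>z. z \<in> space mu \<Longrightarrow> measure P {c \<in> space P. (c, z) \<in> D} \<le> g"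
    and g: "0 \<le> g" and e: "0 < e"
  shows "measure P {c \<in> space P. e \<le> (\<integral>z. h z * indicator D (c, z) \<partial>mu)} \<le> g / e"
proof -
  interpret P: prob_space P by (rule P)
  interpret mu: sigma_finite_measure mu by (rule mu)
  note [measurable] = h(1) D
  define Y where "Y c = (\<integral>\<^sup>+z. ennreal (h z * indicator D (c, z)) \<partial>mu)" for c
  have EY: "(\<integral>\<^sup>+c. Y c * indicator (space P) c \<partial>P) \<le> ennreal g"
    using nn_integral_section_mass_le[OF P mu D h(1,2) sections] h
    by (simp add: Y_def nn_integral_eq_integral)
  have "e \<le> (\<integral>z. h z * indicator D (c, z) \<partial>mu) \<longleftrightarrow> 1 \<le> ennreal (1 / e) * Y c"
    if c: "c \<in> space P" for c
  proof -
    have "(\<lambda>z. h z * indicator D (c, z)) \<in> borel_measurable mu" using c by measurable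
    then have "integrable mu (\<lambda>z. h z * indicator D (c, z))"
      using h by (intro Bochner_Integration.integrable_bound[OF h(3)] AE_I2) (auto simp: indicator_def)
    then have "ennreal (1 / e) * Y c = ennreal ((\<integral>z. h z * indicator D (c, z) \<partial>mu) / e)"
      unfolding Y_def using h(2) e by (simp add: nn_integral_eq_integral ennreal_mult'[symmetric])
    then show ?thesis using e by (simp add: le_divide_eq_1_pos)
  qed
  then have "{c \<in> space P. e \<le> (\<integral>z. h z * indicator D (c, z) \<partial>mu)}
      = {c \<in> space P. 1 \<le> ennreal (1 / e) * Y c}"
    by auto
  also have "emeasure P \<dots> \<le> ennreal (1 / e) * (\<integral>\<^sup>+c. Y c * indicator (space P) c \<partial>P)"
  proof (rule nn_integral_Markov_inequality)
    have "Y \<in> borel_measurable P" unfolding Y_def by (rule mu.borel_measurable_nn_integral) measurable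
    then show "(\<lambda>c. Y c * indicator (space P) c) \<in> borel_measurable P" by measurable
  qed simp
  also have "\<dots> \<le> ennreal (1 / e) * ennreal g"
    using EY by (rule mult_left_mono) simp
  finally show ?thesis
    using e g by (simp add: P.emeasure_eq_measure ennreal_mult'[symmetric])
qed

lemma measure_bind_exceed_le:
  fixes W W' :: "'c \<Rightarrow> real" and x \<eta> \<beta> :: real
  assumes M: "prob_space M" and sM: "sets M = sets S"
    and K: "K \<in> S \<rightarrow>\<^sub>M prob_algebra S"
    and W: "W \<in> borel_measurable S" and W': "W' \<in> borel_measurable S"
    and \<beta>: "0 \<le> \<beta>"
    and kernel_bound: "\<And>c. c \<in> space S \<Longrightarrow> W c \<le> x \<Longrightarrow> measure (K c) {c' \<in> space S. x + \<eta> < W' c'} \<le> \<beta>"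
  shows "measure (M \<bind> K) {c' \<in> space S. x + \<eta> < W' c'} \<le> measure M {c \<in> space S. x < W c} + \<beta>"
proof -
  interpret M: prob_space M by (rule M)
  have spM: "space M = space S" using sM by (rule sets_eq_imp_space_eq)
  have KM: "K \<in> M \<rightarrow>\<^sub>M prob_algebra S" using K by (simp only: measurable_cong_sets[OF sM refl])
  have Km: "K \<in> M \<rightarrow>\<^sub>M subprob_algebra S" using measurable_prob_algebraD[OF KM] .
  have Kp: "prob_space (K c)" if "c \<in> space M" for c
    using measurable_space[OF KM that] by (simp add: space_prob_algebra)
  define E where "E = {c' \<in> space S. x + \<eta> < W' c'}"
  define F where "F = {c \<in> space S. x < W c}"
  have Em: "E \<in> sets S" unfolding E_def using W' by measurable
  have Fm: "F \<in> sets M" unfolding F_def using W sM by measurable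
  interpret MK: prob_space "M \<bind> K" by (rule M.prob_space_bind[OF _ Km]) (simp add: Kp)
  have "emeasure (M \<bind> K) E = (\<integral>\<^sup>+c. emeasure (K c) E \<partial>M)"
    by (rule emeasure_bind[OF M.not_empty Km Em])
  also have "\<dots> \<le> (\<integral>\<^sup>+c. (indicator F c + ennreal \<beta>) \<partial>M)"
  proof (rule nn_integral_mono)
    fix c assume c: "c \<in> space M"
    interpret Kc: prob_space "K c" by (rule Kp[OF c])
    show "emeasure (K c) E \<le> indicator F c + ennreal \<beta>"
    proof (cases "x < W c")
      case True
      then have "indicator F c = (1::ennreal)" unfolding F_def using c spM by simp
      then show ?thesis using Kc.emeasure_le_1[of E] by (simp add: add_increasing2)
    next
      case False
      have "emeasure (K c) E = ennreal (measure (K c) E)" by (rule Kc.emeasure_eq_measure)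
      also have "\<dots> \<le> ennreal \<beta>"
        using kernel_bound[of c] c spM False unfolding E_def by (intro ennreal_leI) auto
      finally show ?thesis by (simp add: add_increasing)
    qed
  qed
  also have "\<dots> = ennreal (measure M F + \<beta>)"
    using Fm \<beta> by (simp add: nn_integral_add M.emeasure_space_1 M.emeasure_eq_measure M.prob_space ennreal_plus)
  finally have "ennreal (measure (M \<bind> K) E) \<le> ennreal (measure M F + \<beta>)"
    by (simp add: MK.emeasure_eq_measure)
  then show ?thesis
    unfolding E_def F_def using \<beta> by (subst (asm) ennreal_le_iff) auto
qed

section \<open>Stability of the filter under the mixing condition\<close>

text \<open>\<open>B n\<close> is the likelihood used in the step from time \<open>n\<close> to time \<open>n + 1\<close>, so
  \<open>filter_iter s k\<close> maps the filter at time \<open>s\<close> to the filter at time \<open>s + k\<close>.\<close>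

locale mixing_filter =
  fixes mu :: "'a measure" and a :: "'a \<Rightarrow> 'a \<Rightarrow> real" and h :: "'a \<Rightarrow> real"
    and ca Ca :: real and B :: "nat \<Rightarrow> 'a \<Rightarrow> real" and Cb :: real
  assumes sigma_finite: "sigma_finite_measure mu" and space_mu: "space mu = UNIV"
    and a_measurable_pair: "(\<lambda>(x', x). a x' x) \<in> borel_measurable (mu \<Otimes>\<^sub>M mu)"
    and h_measurable[measurable]: "h \<in> borel_measurable mu"
    and h_nonneg: "\<And>x. 0 \<le> h x"
    and h_integrable: "integrable mu h" and h_integral: "(\<integral>x. h x \<partial>mu) = 1"
    and ca_pos: "0 < ca" and ca_le_Ca: "ca \<le> Ca"
    and a_bounds: "\<And>x' x. ca * h x \<le> a x' x \<and> a x' x \<le> Ca * h x"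
    and B_measurable[measurable]: "\<And>n. B n \<in> borel_measurable mu"
    and B_pos: "\<And>n x. 0 < B n x"
    and B_ratio: "\<And>n x x'. B n x \<le> Cb * B n x'"
begin

interpretation mu: sigma_finite_measure mu by (rule sigma_finite)

lemma a_measurable[measurable (raw)]:
  assumes "f \<in> M \<rightarrow>\<^sub>M mu" "g \<in> M \<rightarrow>\<^sub>M mu"
  shows "(\<lambda>z. a (f z) (g z)) \<in> borel_measurable M"
  using measurable_compose[OF measurable_Pair[OF assms] a_measurable_pair] by simp

lemma one_le_Cb: "1 \<le> Cb"
  using B_ratio[of 0 undefined undefined] B_pos[of 0 undefined] by simp

lemma Cb_pos: "0 < Cb" using one_le_Cb by simp

lemma Ca_pos: "0 < Ca" using ca_pos ca_le_Ca by simp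

lemma a_nonneg: "0 \<le> a x' x"
  using a_bounds[of x x'] h_nonneg[of x] ca_pos by (smt (verit) mult_nonneg_nonneg)

definition is_density :: "('a \<Rightarrow> real) \<Rightarrow> bool" where
  "is_density p \<longleftrightarrow>
     p \<in> borel_measurable mu \<and> (\<forall>x. 0 \<le> p x) \<and> integrable mu p \<and> (\<integral>x. p x \<partial>mu) = 1"

lemma is_densityD:
  assumes "is_density p"
  shows "p \<in> borel_measurable mu" "0 \<le> p x" "integrable mu p" "(\<integral>x. p x \<partial>mu) = 1"
  using assms by (auto simp: is_density_def)

definition h_bracketed :: "('a \<Rightarrow> real) \<Rightarrow> bool" where
  "h_bracketed V \<longleftrightarrow> V \<in> borel_measurable mu \<and> (\<forall>x. ca * h x \<le> V x \<and> V x \<le> Ca * h x)"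

lemma h_bracketedD:
  assumes "h_bracketed V"
  shows "V \<in> borel_measurable mu" "ca * h x \<le> V x" "V x \<le> Ca * h x" "0 \<le> V x"
proof -
  show "V \<in> borel_measurable mu" "ca * h x \<le> V x" "V x \<le> Ca * h x"
    using assms by (auto simp: h_bracketed_def)
  moreover have "0 \<le> ca * h x" using ca_pos h_nonneg[of x] by simp
  ultimately show "0 \<le> V x" by linarith
qed

definition predict :: "('a \<Rightarrow> real) \<Rightarrow> 'a \<Rightarrow> real" where
  "predict p x = (\<integral>x'. p x' * a x' x \<partial>mu)"

definition correct :: "nat \<Rightarrow> ('a \<Rightarrow> real) \<Rightarrow> 'a \<Rightarrow> real" where
  "correct n V x = B n x * V x / (\<integral>z. B n z * V z \<partial>mu)"

definition filter_step :: "nat \<Rightarrow> ('a \<Rightarrow> real) \<Rightarrow> 'a \<Rightarrow> real" where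
  "filter_step n p = correct n (predict p)"

primrec filter_iter :: "nat \<Rightarrow> nat \<Rightarrow> ('a \<Rightarrow> real) \<Rightarrow> 'a \<Rightarrow> real" where
  "filter_iter s 0 p = p"
| "filter_iter s (Suc k) p = filter_step (s + k) (filter_iter s k p)"

definition dist_L1 :: "('a \<Rightarrow> real) \<Rightarrow> ('a \<Rightarrow> real) \<Rightarrow> real" where
  "dist_L1 f g = (\<integral>x. \<bar>f x - g x\<bar> \<partial>mu)"

lemma dist_L1_nonneg: "0 \<le> dist_L1 f g"
  unfolding dist_L1_def by (intro integral_nonneg_AE) auto

lemma dist_L1_triangle:
  assumes "integrable mu f" "integrable mu g" "integrable mu k"
  shows "dist_L1 f k \<le> dist_L1 f g + dist_L1 g k"
proof -
  have "dist_L1 f k \<le> (\<integral>x. \<bar>f x - g x\<bar> + \<bar>g x - k x\<bar> \<partial>mu)" unfolding dist_L1_def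
    by (rule integral_mono) (use assms in auto)
  also have "\<dots> = dist_L1 f g + dist_L1 g k" unfolding dist_L1_def using assms by simp
  finally show ?thesis .
qed

text \<open>Any point serves as reference: by \<open>B_ratio\<close> all values of \<open>B n\<close> are within the
  factor \<open>Cb\<close> of each other.\<close>

definition B_ref :: "nat \<Rightarrow> real" where "B_ref n = B n undefined"

lemma B_le_B_ref: "B n x \<le> Cb * B_ref n"
  unfolding B_ref_def by (rule B_ratio)

lemma B_ref_le_B: "B_ref n / Cb \<le> B n x"
  using B_ratio[of n undefined x] Cb_pos unfolding B_ref_def by (simp add: field_simps)

lemma B_ref_pos: "0 < B_ref n" unfolding B_ref_def using B_pos by simp

lemma h_bracketed_integrable:
  assumes V: "h_bracketed V"
  shows "integrable mu V"
proof (rule Bochner_Integration.integrable_bound[where f="\<lambda>x. Ca * h x"])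
  show "AE x in mu. norm (V x) \<le> norm (Ca * h x)"
    using h_bracketedD(3,4)[OF V] by (intro AE_I2) (smt (verit) real_norm_def)
qed (use h_integrable h_bracketedD(1)[OF V] in simp_all)

lemma integrable_B_mult:
  assumes "integrable mu V"
  shows "integrable mu (\<lambda>x. B n x * V x)"
proof (rule Bochner_Integration.integrable_bound[where f="\<lambda>x. (Cb * B_ref n) * \<bar>V x\<bar>"])
  show "integrable mu (\<lambda>x. (Cb * B_ref n) * \<bar>V x\<bar>)" using assms by simp
  show "(\<lambda>x. B n x * V x) \<in> borel_measurable mu" using assms by measurable
  show "AE x in mu. norm (B n x * V x) \<le> norm (Cb * B_ref n * \<bar>V x\<bar>)"
    using B_le_B_ref[of n] abs_of_pos[OF B_pos[of n]] Cb_pos B_ref_pos[of n]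
    by (intro AE_I2) (simp add: abs_mult mult_right_mono)
qed

lemma normaliser_lower_bound:
  assumes V: "h_bracketed V"
  shows "B_ref n / Cb * ca \<le> (\<integral>z. B n z * V z \<partial>mu)"
proof -
  have "(\<integral>z. (B_ref n / Cb * ca) * h z \<partial>mu) \<le> (\<integral>z. B n z * V z \<partial>mu)"
  proof (rule integral_mono)
    show "integrable mu (\<lambda>z. B n z * V z)"
      by (rule integrable_B_mult[OF h_bracketed_integrable[OF V]])
    fix z
    have "B_ref n / Cb * ca * h z \<le> B n z * (ca * h z)"
      using B_ref_le_B[of n z] h_nonneg[of z] ca_pos
      by (metis mult.assoc mult_right_mono mult_nonneg_nonneg less_imp_le)
    also have "\<dots> \<le> B n z * V z" using h_bracketedD(2)[OF V] B_pos[of n z] by simp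
    finally show "B_ref n / Cb * ca * h z \<le> B n z * V z" .
  qed (use h_integrable in simp)
  then show ?thesis using h_integral by simp
qed

lemma normaliser_pos: "h_bracketed V \<Longrightarrow> 0 < (\<integral>z. B n z * V z \<partial>mu)"
  using normaliser_lower_bound[of V n] B_ref_pos[of n] Cb_pos ca_pos
  by (smt (verit) divide_pos_pos mult_pos_pos)

lemma is_density_correct:
  assumes V: "h_bracketed V"
  shows "is_density (correct n V)"
proof -
  define Z where "Z = (\<integral>z. B n z * V z \<partial>mu)"
  have Z: "0 < Z" unfolding Z_def by (rule normaliser_pos[OF V])
  have [measurable]: "V \<in> borel_measurable mu" by (rule h_bracketedD(1)[OF V])
  have "correct n V = (\<lambda>x. B n x * V x / Z)" unfolding correct_def Z_def by auto
  moreover have "integrable mu (\<lambda>x. B n x * V x / Z)"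
    using integrable_B_mult[OF h_bracketed_integrable[OF V]] by simp
  moreover have "0 \<le> B n x * V x / Z" for x
    using Z B_pos[of n x] h_bracketedD(4)[OF V, of x] by simp
  ultimately show ?thesis unfolding is_density_def using Z by (simp add: Z_def)
qed

definition correct_lip :: real where "correct_lip = 2 * Cb^2 / ca"

lemma correct_lip_pos: "0 < correct_lip"
  unfolding correct_lip_def using Cb_pos ca_pos by simp

lemma integral_B_abs_diff_le:
  assumes "integrable mu V" "integrable mu U"
  shows "(\<integral>x. B n x * \<bar>V x - U x\<bar> \<partial>mu) \<le> Cb * B_ref n * dist_L1 V U"
proof -
  have "(\<integral>x. B n x * \<bar>V x - U x\<bar> \<partial>mu) \<le> (\<integral>x. Cb * B_ref n * \<bar>V x - U x\<bar> \<partial>mu)"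
    using assms B_le_B_ref[of n] by (intro integral_mono integrable_B_mult) (auto simp: mult_right_mono)
  then show ?thesis unfolding dist_L1_def by simp
qed

lemma abs_normaliser_diff_le:
  assumes "integrable mu V" "integrable mu U"
  shows "\<bar>(\<integral>z. B n z * U z \<partial>mu) - (\<integral>z. B n z * V z \<partial>mu)\<bar> \<le> (\<integral>x. B n x * \<bar>V x - U x\<bar> \<partial>mu)"
proof -
  have "integrable mu (\<lambda>x. B n x * U x)" "integrable mu (\<lambda>x. B n x * V x)"
    using assms by (auto intro: integrable_B_mult)
  then have "(\<integral>z. B n z * U z \<partial>mu) - (\<integral>z. B n z * V z \<partial>mu) = (\<integral>x. B n x * (U x - V x) \<partial>mu)"
    by (simp add: algebra_simps)
  also have "\<bar>\<dots>\<bar> \<le> (\<integral>x. B n x * \<bar>V x - U x\<bar> \<partial>mu)"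
    using assms abs_of_pos[OF B_pos[of n]]
    by (intro abs_integral_le_integral integrable_B_mult)
      (auto simp: abs_mult abs_minus_commute simp flip: right_diff_distrib)
  finally show ?thesis .
qed

lemma abs_correct_diff_le:
  fixes n :: nat
  assumes V: "h_bracketed V" and U: "h_bracketed U"
  defines "Zv \<equiv> \<integral>z. B n z * V z \<partial>mu" and "Zu \<equiv> \<integral>z. B n z * U z \<partial>mu"
  shows "\<bar>correct n V x - correct n U x\<bar>
           \<le> B n x * \<bar>V x - U x\<bar> / Zv + B n x * U x * (\<bar>Zu - Zv\<bar> / (Zv * Zu))"
proof -
  have Zv: "0 < Zv" and Zu: "0 < Zu"
    unfolding Zv_def Zu_def using normaliser_pos V U by auto
  have "correct n V x - correct n U x
      = B n x * (V x - U x) / Zv + B n x * U x * ((Zu - Zv) / (Zv * Zu))"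
    unfolding correct_def Zv_def[symmetric] Zu_def[symmetric] using Zv Zu
    by (simp add: field_simps)
  then have "\<bar>correct n V x - correct n U x\<bar>
      \<le> \<bar>B n x * (V x - U x) / Zv\<bar> + \<bar>B n x * U x * ((Zu - Zv) / (Zv * Zu))\<bar>"
    by (simp only: abs_triangle_ineq)
  also have "\<dots> = B n x * \<bar>V x - U x\<bar> / Zv + B n x * U x * (\<bar>Zu - Zv\<bar> / (Zv * Zu))"
    using Zv Zu B_pos[of n x] h_bracketedD(4)[OF U, of x] by (simp add: abs_mult)
  finally show ?thesis .
qed

lemma dist_L1_correct_le:
  assumes V: "h_bracketed V" and U: "h_bracketed U"
  shows "dist_L1 (correct n V) (correct n U) \<le> correct_lip * dist_L1 V U"
proof -
  define Zv where "Zv = (\<integral>z. B n z * V z \<partial>mu)"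
  define Zu where "Zu = (\<integral>z. B n z * U z \<partial>mu)"
  define E where "E = (\<integral>x. B n x * \<bar>V x - U x\<bar> \<partial>mu)"
  have Zv: "0 < Zv" and Zu: "0 < Zu"
    unfolding Zv_def Zu_def using normaliser_pos V U by auto
  have iV: "integrable mu V" and iU: "integrable mu U"
    using V U by (auto intro: h_bracketed_integrable)
  have iBU: "integrable mu (\<lambda>x. B n x * U x)" and iE: "integrable mu (\<lambda>x. B n x * \<bar>V x - U x\<bar>)"
    using iV iU by (auto intro!: integrable_B_mult)
  have "dist_L1 (correct n V) (correct n U)
      \<le> (\<integral>x. B n x * \<bar>V x - U x\<bar> / Zv + B n x * U x * (\<bar>Zu - Zv\<bar> / (Zv * Zu)) \<partial>mu)"
    unfolding dist_L1_def Zv_def Zu_def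
    using is_densityD(3)[OF is_density_correct[OF V]] is_densityD(3)[OF is_density_correct[OF U]]
      iE iBU abs_correct_diff_le[OF V U]
    by (intro integral_mono) auto
  also have "\<dots> = E / Zv + Zu * (\<bar>Zu - Zv\<bar> / (Zv * Zu))"
    using iE iBU unfolding E_def Zu_def by simp
  also have "\<dots> = (E + \<bar>Zu - Zv\<bar>) / Zv"
    using Zu Zv by (simp add: field_simps)
  also have "\<dots> \<le> 2 * (Cb * B_ref n * dist_L1 V U) / (B_ref n / Cb * ca)"
    using abs_normaliser_diff_le[OF iV iU, of n] integral_B_abs_diff_le[OF iV iU, of n]
      normaliser_lower_bound[OF V, of n] Zv Cb_pos B_ref_pos[of n] ca_pos dist_L1_nonneg[of V U]
    by (intro frac_le) (auto simp: Zv_def Zu_def E_def)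
  also have "\<dots> = correct_lip * dist_L1 V U"
    unfolding correct_lip_def using Cb_pos B_ref_pos[of n] ca_pos
    by (simp add: field_simps power2_eq_square)
  finally show ?thesis .
qed

lemma a_measurable_source[measurable]: "(\<lambda>x'. a x' x) \<in> borel_measurable mu"
  by (rule a_measurable) (auto simp: space_mu)

lemma integrable_mult_a:
  assumes f: "integrable mu f"
  shows "integrable mu (\<lambda>x'. f x' * a x' x)"
proof (rule Bochner_Integration.integrable_bound[where f="\<lambda>x'. (Ca * h x) * \<bar>f x'\<bar>"])
  show "integrable mu (\<lambda>x'. (Ca * h x) * \<bar>f x'\<bar>)" using f by auto
  show "(\<lambda>x'. f x' * a x' x) \<in> borel_measurable mu" using f by measurable
  show "AE x' in mu. norm (f x' * a x' x) \<le> norm (Ca * h x * \<bar>f x'\<bar>)"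
  proof (rule AE_I2)
    fix x'
    have "\<bar>f x'\<bar> * a x' x \<le> \<bar>f x'\<bar> * (Ca * h x)" using a_bounds[of x x'] by (simp add: mult_left_mono)
    then show "norm (f x' * a x' x) \<le> norm (Ca * h x * \<bar>f x'\<bar>)"
      using Ca_pos h_nonneg[of x] a_nonneg[of x' x] by (simp add: abs_mult mult.commute)
  qed
qed

lemma predict_measurable:
  assumes [measurable]: "p \<in> borel_measurable mu"
  shows "predict p \<in> borel_measurable mu"
  unfolding predict_def[abs_def] by (rule mu.borel_measurable_lebesgue_integral) measurable

lemma integral_mult_a_bounds:
  assumes "integrable mu f" "\<And>x. 0 \<le> f x"
  shows "ca * h x * (\<integral>x'. f x' \<partial>mu) \<le> (\<integral>x'. f x' * a x' x \<partial>mu)"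
    and "(\<integral>x'. f x' * a x' x \<partial>mu) \<le> Ca * h x * (\<integral>x'. f x' \<partial>mu)"
proof -
  have "(\<integral>x'. f x' * (ca * h x) \<partial>mu) \<le> (\<integral>x'. f x' * a x' x \<partial>mu)"
    using assms integrable_mult_a[OF assms(1)] a_bounds
    by (intro integral_mono) (auto intro!: mult_left_mono)
  then show "ca * h x * (\<integral>x'. f x' \<partial>mu) \<le> (\<integral>x'. f x' * a x' x \<partial>mu)"
    by (simp add: mult.commute)
  have "(\<integral>x'. f x' * a x' x \<partial>mu) \<le> (\<integral>x'. f x' * (Ca * h x) \<partial>mu)"
    using assms integrable_mult_a[OF assms(1)] a_bounds
    by (intro integral_mono) (auto intro!: mult_left_mono)
  then show "(\<integral>x'. f x' * a x' x \<partial>mu) \<le> Ca * h x * (\<integral>x'. f x' \<partial>mu)"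
    by (simp add: mult.commute)
qed

lemma h_bracketed_predict:
  assumes p: "is_density p"
  shows "h_bracketed (predict p)"
  unfolding h_bracketed_def predict_def[symmetric]
  using predict_measurable[OF is_densityD(1)[OF p]]
    integral_mult_a_bounds[OF is_densityD(3,2)[OF p]] is_densityD(4)[OF p]
  by (auto simp: predict_def)

lemma predict_diff:
  assumes "integrable mu p" "integrable mu q"
  shows "predict p x - c * predict q x = (\<integral>x'. (p x' - c * q x') * a x' x \<partial>mu)"
  unfolding predict_def using integrable_mult_a[OF assms(1)] integrable_mult_a[OF assms(2)]
  by (simp add: left_diff_distrib mult.assoc)

lemma dist_L1_predict_le:
  assumes p: "is_density p" and q: "is_density q"
  shows "dist_L1 (predict p) (predict q) \<le> Ca * dist_L1 p q"
proof -
  have ip: "integrable mu p" and iq: "integrable mu q"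
    using p q by (auto intro: is_densityD)
  have ipq: "integrable mu (\<lambda>x. \<bar>p x - q x\<bar>)" using ip iq by auto
  have pointwise: "\<bar>predict p x - predict q x\<bar> \<le> Ca * h x * dist_L1 p q" for x
  proof -
    have "\<bar>predict p x - predict q x\<bar> = \<bar>\<integral>x'. (p x' - q x') * a x' x \<partial>mu\<bar>"
      using predict_diff[OF ip iq, of x 1] by simp
    also have "\<dots> \<le> (\<integral>x'. \<bar>p x' - q x'\<bar> * a x' x \<partial>mu)"
      using integrable_mult_a[of "\<lambda>x'. p x' - q x'" x] integrable_mult_a[OF ipq, of x] ip iq
      by (intro abs_integral_le_integral) (auto simp: abs_mult a_nonneg)
    also have "\<dots> \<le> Ca * h x * dist_L1 p q"
      unfolding dist_L1_def by (rule integral_mult_a_bounds(2)[OF ipq]) simp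
    finally show ?thesis .
  qed
  have "dist_L1 (predict p) (predict q) \<le> (\<integral>x. Ca * h x * dist_L1 p q \<partial>mu)"
    unfolding dist_L1_def[of "predict p"]
    using h_bracketed_integrable[OF h_bracketed_predict[OF p]]
      h_bracketed_integrable[OF h_bracketed_predict[OF q]] h_integrable pointwise
    by (intro integral_mono) auto
  also have "\<dots> = Ca * dist_L1 p q" using h_integral by simp
  finally show ?thesis .
qed

definition lip :: real where "lip = correct_lip * Ca"

lemma one_le_lip: "1 \<le> lip"
proof -
  have "1 \<le> Cb^2" using one_le_Cb by (simp add: one_le_power)
  moreover have "1 \<le> Ca / ca" using ca_le_Ca ca_pos by simp
  ultimately have "1 \<le> Cb^2 * (Ca / ca)" by (metis mult_mono' mult_1 zero_le_one)
  then show ?thesis unfolding lip_def correct_lip_def by simp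
qed

lemma is_density_filter_step: "is_density p \<Longrightarrow> is_density (filter_step n p)"
  unfolding filter_step_def by (rule is_density_correct[OF h_bracketed_predict])

lemma dist_L1_filter_step_le:
  assumes p: "is_density p" and q: "is_density q"
  shows "dist_L1 (filter_step n p) (filter_step n q) \<le> lip * dist_L1 p q"
proof -
  have "dist_L1 (filter_step n p) (filter_step n q) \<le> correct_lip * dist_L1 (predict p) (predict q)"
    unfolding filter_step_def
    by (rule dist_L1_correct_le[OF h_bracketed_predict[OF p] h_bracketed_predict[OF q]])
  also have "\<dots> \<le> correct_lip * (Ca * dist_L1 p q)"
    using dist_L1_predict_le[OF p q] correct_lip_pos by (intro mult_left_mono) auto
  finally show ?thesis unfolding lip_def by (simp add: mult_ac)
qed

lemma is_density_filter_iter: "is_density p \<Longrightarrow> is_density (filter_iter s k p)"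
  by (induction k) (auto intro: is_density_filter_step)

lemma dist_L1_filter_iter_le:
  assumes p: "is_density p" and q: "is_density q"
  shows "dist_L1 (filter_iter s k p) (filter_iter s k q) \<le> lip^k * dist_L1 p q"
proof (induction k)
  case (Suc k)
  have "dist_L1 (filter_iter s (Suc k) p) (filter_iter s (Suc k) q)
      \<le> lip * dist_L1 (filter_iter s k p) (filter_iter s k q)"
    using dist_L1_filter_step_le[OF is_density_filter_iter[OF p] is_density_filter_iter[OF q]]
    by simp
  also have "\<dots> \<le> lip * (lip^k * dist_L1 p q)" using Suc one_le_lip by (intro mult_left_mono) auto
  finally show ?case by (simp add: mult_ac)
qed simp

lemma filter_iter_Suc_shift: "filter_iter s (Suc k) p = filter_iter (Suc s) k (filter_step s p)"
  by (induction k) auto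

subsection \<open>Exponential forgetting of the initial condition\<close>

text \<open>\<open>ratio_spread_le P Q r\<close> says \<open>sup (P/Q) \<le> r * inf (P/Q)\<close>, i.e. the Hilbert projective
  distance of \<open>P\<close> and \<open>Q\<close> is at most \<open>ln r\<close>; Birkhoff's contraction argument is carried
  out for this quantity.\<close>

definition ratio_spread_le :: "('a \<Rightarrow> real) \<Rightarrow> ('a \<Rightarrow> real) \<Rightarrow> real \<Rightarrow> bool" where
  "ratio_spread_le P Q r \<longleftrightarrow> (\<exists>m M. 0 < m \<and> M \<le> r * m \<and> (\<forall>x. m * Q x \<le> P x \<and> P x \<le> M * Q x))"

definition mixing_ratio :: real where "mixing_ratio = ca / Ca"

lemma mixing_ratio_pos: "0 < mixing_ratio"
  unfolding mixing_ratio_def using ca_pos Ca_pos by simp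

lemma mixing_ratio_le_1: "mixing_ratio \<le> 1"
  unfolding mixing_ratio_def using ca_le_Ca Ca_pos by simp

definition forgetting_bound :: "nat \<Rightarrow> real" where
  "forgetting_bound k = (1 / mixing_ratio^2 - 1) * (1 - mixing_ratio)^k"

lemma forgetting_bound_nonneg: "0 \<le> forgetting_bound k"
proof -
  have "mixing_ratio^2 \<le> 1" using mixing_ratio_pos mixing_ratio_le_1 by (simp add: power_le_one)
  then have "0 \<le> 1 / mixing_ratio^2 - 1" using mixing_ratio_pos by (simp add: field_simps)
  then show ?thesis unfolding forgetting_bound_def using mixing_ratio_le_1 by simp
qed

lemma forgetting_bound_tendsto_0: "forgetting_bound \<longlonglongrightarrow> 0"
  unfolding forgetting_bound_def[abs_def]
  by (intro tendsto_mult_right_zero LIMSEQ_power_zero) (use mixing_ratio_pos mixing_ratio_le_1 in auto)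

lemma ratio_spread_leE:
  assumes p: "is_density p" and q: "is_density q" and "ratio_spread_le p q r"
  obtains m M where "0 < m" "m \<le> 1" "1 \<le> M" "M \<le> r * m" "1 \<le> r"
    and "\<And>x. m * q x \<le> p x" "\<And>x. p x \<le> M * q x"
proof -
  obtain m M where m: "0 < m" and M: "M \<le> r * m" and le: "\<And>x. m * q x \<le> p x \<and> p x \<le> M * q x"
    using assms(3) unfolding ratio_spread_le_def by blast
  have ip: "integrable mu p" and iq: "integrable mu q"
    using p q by (auto intro: is_densityD)
  have "(\<integral>x. m * q x \<partial>mu) \<le> (\<integral>x. p x \<partial>mu)"
    using ip iq le by (intro integral_mono) auto
  moreover have "(\<integral>x. p x \<partial>mu) \<le> (\<integral>x. M * q x \<partial>mu)"
    using ip iq le by (intro integral_mono) auto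
  ultimately have m1: "m \<le> 1" and M1: "1 \<le> M"
    using is_densityD(4)[OF p] is_densityD(4)[OF q] by simp_all
  have "1 \<le> r"
  proof (rule ccontr)
    assume "\<not> 1 \<le> r"
    then have "r * m < 1 * m" using m by (intro mult_strict_right_mono) auto
    with M M1 m1 show False by simp
  qed
  with m m1 M1 M le that show ?thesis by blast
qed

lemma ratio_spread_le_mono: "ratio_spread_le P Q r \<Longrightarrow> r \<le> r' \<Longrightarrow> ratio_spread_le P Q r'"
  unfolding ratio_spread_le_def by (meson mult_right_mono less_imp_le order_trans)

text \<open>Each mass point of \<open>p\<close> is spread by \<open>a\<close> over at least the fraction \<open>mixing_ratio\<close> of
  the common profile \<open>Ca * h\<close>; this pulls the ratio bounds of the predicted densities
  towards \<open>1\<close>.\<close>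

lemma predict_ratio_bounds:
  assumes p: "is_density p" and q: "is_density q" and m: "0 < m" "m \<le> 1" and M: "1 \<le> M"
    and le: "\<And>x. m * q x \<le> p x" "\<And>x. p x \<le> M * q x"
  shows "(mixing_ratio + (1 - mixing_ratio) * m) * predict q x \<le> predict p x"
    and "predict p x \<le> (mixing_ratio + (1 - mixing_ratio) * M) * predict q x"
proof -
  have ip: "integrable mu p" and iq: "integrable mu q"
    using p q by (auto intro: is_densityD)
  have "predict q x \<le> Ca * h x" by (rule h_bracketedD(3)[OF h_bracketed_predict[OF q]])
  then have q_le: "mixing_ratio * predict q x \<le> ca * h x"
    unfolding mixing_ratio_def using Ca_pos ca_pos by (simp add: field_simps)
  have mass: "ca * h x * (\<integral>x'. f x' \<partial>mu) \<le> (\<integral>x'. f x' * a x' x \<partial>mu)"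
    if "integrable mu f" "\<And>x'. 0 \<le> f x'" for f
    by (rule integral_mult_a_bounds(1)[OF that])
  have "ca * h x * (1 - m) \<le> predict p x - m * predict q x"
    using mass[of "\<lambda>x'. p x' - m * q x'"] predict_diff[OF ip iq, of x m] ip iq le(1)
      is_densityD(4)[OF p] is_densityD(4)[OF q]
    by simp
  moreover have "mixing_ratio * predict q x * (1 - m) \<le> ca * h x * (1 - m)"
    using q_le m by (intro mult_right_mono) auto
  ultimately show "(mixing_ratio + (1 - mixing_ratio) * m) * predict q x \<le> predict p x"
    by (simp add: algebra_simps)
  have "ca * h x * (M - 1) \<le> M * predict q x - predict p x"
    using mass[of "\<lambda>x'. M * q x' - p x'"] predict_diff[OF iq ip, of x "1 / M"] ip iq le(2) M
      is_densityD(4)[OF p] is_densityD(4)[OF q]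
    by (simp add: predict_def left_diff_distrib mult.assoc integrable_mult_a)
  moreover have "mixing_ratio * predict q x * (M - 1) \<le> ca * h x * (M - 1)"
    using q_le M by (intro mult_right_mono) auto
  ultimately show "predict p x \<le> (mixing_ratio + (1 - mixing_ratio) * M) * predict q x"
    by (simp add: algebra_simps)
qed

lemma ratio_spread_le_correct:
  assumes U: "h_bracketed U" and V: "h_bracketed V" and lo: "0 < lo"
    and le: "\<And>x. lo * U x \<le> V x \<and> V x \<le> hi * U x"
  shows "ratio_spread_le (correct n V) (correct n U) (hi / lo)"
proof -
  define Zv where "Zv = (\<integral>z. B n z * V z \<partial>mu)"
  define Zu where "Zu = (\<integral>z. B n z * U z \<partial>mu)"
  have Zv: "0 < Zv" unfolding Zv_def by (rule normaliser_pos[OF V])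
  have Zu: "0 < Zu" unfolding Zu_def by (rule normaliser_pos[OF U])
  have correct_eq: "correct n V x = B n x * V x / Zv" "correct n U x = B n x * U x / Zu" for x
    unfolding correct_def Zv_def Zu_def by simp_all
  show ?thesis unfolding ratio_spread_le_def
  proof (intro exI conjI allI)
    show "0 < lo * Zu / Zv" using lo Zu Zv by simp
    show "hi * Zu / Zv \<le> hi / lo * (lo * Zu / Zv)" using lo by simp
    fix x
    show "lo * Zu / Zv * correct n U x \<le> correct n V x"
      "correct n V x \<le> hi * Zu / Zv * correct n U x"
      unfolding correct_eq using le[of x] B_pos[of n x] Zu Zv
      by (simp_all add: field_simps mult_left_mono)
  qed
qed

lemma ratio_spread_le_filter_step:
  assumes p: "is_density p" and q: "is_density q" and r: "ratio_spread_le p q r"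
  shows "ratio_spread_le (filter_step n p) (filter_step n q) (1 + (1 - mixing_ratio) * (r - 1))"
proof -
  obtain m M where m: "0 < m" "m \<le> 1" and M: "1 \<le> M" "M \<le> r * m" and r1: "1 \<le> r"
    and le: "\<And>x. m * q x \<le> p x" "\<And>x. p x \<le> M * q x"
    using ratio_spread_leE[OF p q r] by blast
  define lo where "lo = mixing_ratio + (1 - mixing_ratio) * m"
  define hi where "hi = mixing_ratio + (1 - mixing_ratio) * M"
  have lo: "0 < lo"
    unfolding lo_def using mixing_ratio_pos mixing_ratio_le_1 m by (smt (verit) mult_nonneg_nonneg)
  have "ratio_spread_le (correct n (predict p)) (correct n (predict q)) (hi / lo)"
    using predict_ratio_bounds[OF p q m M(1) le] unfolding lo_def[symmetric] hi_def[symmetric]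
    by (intro ratio_spread_le_correct h_bracketed_predict p q lo) simp
  moreover have "hi / lo \<le> 1 + (1 - mixing_ratio) * (r - 1)"
  proof -
    have "hi \<le> mixing_ratio + (1 - mixing_ratio) * (r * m)"
      unfolding hi_def using M mixing_ratio_le_1 by (intro add_left_mono mult_left_mono) auto
    also have "\<dots> \<le> (1 + (1 - mixing_ratio) * (r - 1)) * lo"
    proof -
      have "(1 + (1 - mixing_ratio) * (r - 1)) * lo - (mixing_ratio + (1 - mixing_ratio) * (r * m))
          = (1 - mixing_ratio) * (r - 1) * mixing_ratio * (1 - m)"
        unfolding lo_def by (simp add: algebra_simps)
      also have "\<dots> \<ge> 0" using mixing_ratio_pos mixing_ratio_le_1 r1 m by simp
      finally show ?thesis by simp
    qed
    finally show ?thesis using lo by (simp add: pos_divide_le_eq)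
  qed
  ultimately show ?thesis unfolding filter_step_def by (rule ratio_spread_le_mono)
qed

lemma ratio_spread_le_filter_step_any:
  assumes p: "is_density p" and q: "is_density q"
  shows "ratio_spread_le (filter_step n p) (filter_step n q) (1 / mixing_ratio^2)"
proof -
  have "ratio_spread_le (correct n (predict p)) (correct n (predict q)) ((1 / mixing_ratio) / mixing_ratio)"
  proof (rule ratio_spread_le_correct[OF h_bracketed_predict[OF q] h_bracketed_predict[OF p] mixing_ratio_pos])
    fix x
    note bp = h_bracketedD(2,3)[OF h_bracketed_predict[OF p], of x]
    note bq = h_bracketedD(2,3)[OF h_bracketed_predict[OF q], of x]
    have "mixing_ratio * predict q x \<le> mixing_ratio * (Ca * h x)"
      using bq mixing_ratio_pos by (intro mult_left_mono) auto
    moreover have "(1 / mixing_ratio) * (ca * h x) \<le> (1 / mixing_ratio) * predict q x"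
      using bq mixing_ratio_pos by (intro mult_left_mono) auto
    moreover have "mixing_ratio * (Ca * h x) = ca * h x" "(1 / mixing_ratio) * (ca * h x) = Ca * h x"
      unfolding mixing_ratio_def using ca_pos Ca_pos by simp_all
    ultimately show "mixing_ratio * predict q x \<le> predict p x \<and> predict p x \<le> 1 / mixing_ratio * predict q x"
      using bp by simp
  qed
  then show ?thesis unfolding filter_step_def by (simp add: power2_eq_square)
qed

lemma dist_L1_le_ratio_spread:
  assumes P: "is_density P" and Q: "is_density Q" and r: "ratio_spread_le P Q r"
  shows "dist_L1 P Q \<le> r - 1"
proof -
  obtain m M where m: "0 < m" "m \<le> 1" and M: "1 \<le> M" "M \<le> r * m" and r1: "1 \<le> r"
    and le: "\<And>x. m * Q x \<le> P x" "\<And>x. P x \<le> M * Q x"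
    using ratio_spread_leE[OF P Q r] by blast
  have pointwise: "\<bar>P x - Q x\<bar> \<le> (M - m) * Q x" for x
  proof -
    have "(M - 1) * Q x \<le> (M - m) * Q x" "(1 - m) * Q x \<le> (M - m) * Q x"
      using m M is_densityD(2)[OF Q, of x] by (auto intro: mult_right_mono)
    then show ?thesis using le[of x] by (simp add: abs_le_iff algebra_simps)
  qed
  have "dist_L1 P Q \<le> (\<integral>x. (M - m) * Q x \<partial>mu)" unfolding dist_L1_def
    using is_densityD(3)[OF P] is_densityD(3)[OF Q] pointwise by (intro integral_mono) auto
  also have "\<dots> = M - m" using is_densityD(4)[OF Q] by simp
  also have "\<dots> \<le> r - 1"
    using M m r1 mult_left_le[of m "r - 1"] by (simp add: algebra_simps)
  finally show ?thesis .
qed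

lemma ratio_spread_le_filter_iter:
  assumes p: "is_density p" and q: "is_density q"
  shows "ratio_spread_le (filter_iter s (Suc k) p) (filter_iter s (Suc k) q)
           (1 + forgetting_bound k)"
proof (induction k)
  case 0
  show ?case using ratio_spread_le_filter_step_any[OF p q, of s] by (simp add: forgetting_bound_def)
next
  case (Suc k)
  show ?case
    using ratio_spread_le_filter_step[OF is_density_filter_iter[OF p] is_density_filter_iter[OF q] Suc.IH]
    by (simp add: forgetting_bound_def mult_ac)
qed

lemma dist_L1_filter_iter_forget:
  assumes p: "is_density p" and q: "is_density q"
  shows "dist_L1 (filter_iter s (Suc k) p) (filter_iter s (Suc k) q) \<le> forgetting_bound k"
  using dist_L1_le_ratio_spread[OF is_density_filter_iter[OF p] is_density_filter_iter[OF q]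
      ratio_spread_le_filter_iter[OF p q]]
  by simp

subsection \<open>Concentration of the empirical predictive density\<close>

definition particle_mixture :: "nat \<Rightarrow> (nat \<Rightarrow> 'a) \<Rightarrow> 'a \<Rightarrow> real" where
  "particle_mixture N c x = (\<Sum>j<N. a (c j) x) / real N"

lemma particle_mixture_bounds:
  assumes N: "1 \<le> N"
  shows "ca * h x \<le> particle_mixture N c x" "particle_mixture N c x \<le> Ca * h x"
proof -
  have "(\<Sum>j<N. ca * h x) \<le> (\<Sum>j<N. a (c j) x)"
    using a_bounds by (intro sum_mono) auto
  moreover have "(\<Sum>j<N. a (c j) x) \<le> (\<Sum>j<N. Ca * h x)"
    using a_bounds by (intro sum_mono) auto
  ultimately show "ca * h x \<le> particle_mixture N c x" "particle_mixture N c x \<le> Ca * h x"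
    using N unfolding particle_mixture_def by (simp_all add: field_simps)
qed

lemma particle_mixture_measurable_pair:
  "(\<lambda>(c, x). particle_mixture N c x) \<in> borel_measurable (PiM {..<N} (\<lambda>_. mu) \<Otimes>\<^sub>M mu)"
proof -
  have "(\<lambda>w. (\<Sum>j<N. a (fst w j) (snd w)) / real N) \<in> borel_measurable (PiM {..<N} (\<lambda>_. mu) \<Otimes>\<^sub>M mu)"
    by measurable
  then show ?thesis unfolding particle_mixture_def by (simp add: case_prod_beta)
qed

lemma h_bracketed_particle_mixture:
  assumes "1 \<le> N"
  shows "h_bracketed (particle_mixture N c)"
proof -
  have "particle_mixture N c \<in> borel_measurable mu"
    unfolding particle_mixture_def[abs_def]
    by (intro borel_measurable_divide borel_measurable_sum a_measurable) (auto simp: space_mu)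
  then show ?thesis
    unfolding h_bracketed_def using particle_mixture_bounds[OF assms] by simp
qed

lemma prob_space_PiM_density:
  assumes "is_density p"
  shows "prob_space (PiM I (\<lambda>_. density mu (\<lambda>x. ennreal (p x))))"
  using is_densityD[OF assms] by (intro prob_space_PiM prob_space_density_real) auto

lemma expectation_a_component:
  assumes p: "is_density p" and j: "j < N"
  shows "prob_space.expectation (PiM {..<N} (\<lambda>_. density mu (\<lambda>x. ennreal (p x)))) (\<lambda>c. a (c j) z)
    = predict p z"
proof -
  let ?D = "density mu (\<lambda>x. ennreal (p x))"
  let ?P = "PiM {..<N} (\<lambda>_. ?D)"
  have [measurable]: "p \<in> borel_measurable mu" by (rule is_densityD(1)[OF p])
  have "(\<integral>c. a (c j) z \<partial>?P) = integral\<^sup>L (distr ?P ?D (\<lambda>c. c j)) (\<lambda>x'. a x' z)"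
    using j by (intro integral_distr[symmetric]) (auto simp: measurable_cong_sets[OF sets_density refl])
  also have "distr ?P ?D (\<lambda>c. c j) = ?D"
    using j is_densityD[OF p] by (intro distr_PiM_component prob_space_density_real) auto
  also have "integral\<^sup>L ?D (\<lambda>x'. a x' z) = (\<integral>x'. p x' * a x' z \<partial>mu)"
    using integral_density[of "\<lambda>x'. a x' z" mu p] is_densityD(2)[OF p] by simp
  finally show ?thesis unfolding predict_def by simp
qed

lemma sum_a_components_deviation:
  assumes p: "is_density p" and N: "1 \<le> N" and e: "0 \<le> e" and hz: "0 < h z"
  defines "P \<equiv> PiM {..<N} (\<lambda>_. density mu (\<lambda>x. ennreal (p x)))"
  shows "measure P {c \<in> space P. e \<le> \<bar>(\<Sum>i<N. a (c i) z) - real N * predict p z\<bar>}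
           \<le> 2 * exp (-2 * e^2 / (real N * (Ca * h z)^2))"
proof -
  define X :: "nat \<Rightarrow> (nat \<Rightarrow> 'a) \<Rightarrow> real" where "X = (\<lambda>j c. a (c j) z)"
  interpret P: prob_space P unfolding P_def by (rule prob_space_PiM_density[OF p])
  have "P.indep_vars (\<lambda>_. density mu (\<lambda>x. ennreal (p x))) (\<lambda>i c. c i) {..<N}"
    unfolding P_def using N is_densityD[OF p]
    by (intro indep_vars_PiM_components prob_space_density_real) (auto simp: lessThan_empty_iff)
  then have indep: "P.indep_vars (\<lambda>_. borel) X {..<N}"
    unfolding X_def
    by (rule P.indep_vars_compose2[of _ _ _ "\<lambda>_ x'. a x' z"])
      (simp add: measurable_cong_sets[OF sets_density refl])
  have "(\<Sum>j<N. P.expectation (X j)) = (\<Sum>j<N. predict p z)"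
    unfolding X_def P_def using expectation_a_component[OF p] by (intro sum.cong) auto
  then have mean: "(\<Sum>j<N. P.expectation (X j)) = real N * predict p z" by simp
  interpret Hoeffding_ineq P "{..<N}" X "\<lambda>_. 0" "\<lambda>_. Ca * h z" "real N * predict p z"
    by unfold_locales (use indep a_bounds a_nonneg mean in \<open>auto simp: X_def\<close>)
  have "P.prob {c \<in> space P. e \<le> \<bar>(\<Sum>i<N. X i c) - real N * predict p z\<bar>}
      \<le> 2 * exp (-2 * e^2 / (\<Sum>i<N. (Ca * h z - 0)^2))"
    using N Ca_pos hz e by (intro Hoeffding_ineq_abs_ge) auto
  then show ?thesis unfolding X_def by simp
qed

text \<open>Hoeffding's inequality at a fixed point \<open>z\<close>: the \<open>a (c j) z\<close> are i.i.d. with values in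
  \<open>[0, Ca * h z]\<close>.\<close>

lemma particle_mixture_pointwise_deviation:
  assumes p: "is_density p" and N: "1 \<le> N" and d: "0 < d"
  defines "P \<equiv> PiM {..<N} (\<lambda>_. density mu (\<lambda>x. ennreal (p x)))"
  shows "measure P {c \<in> space P. d / 2 * h z < \<bar>particle_mixture N c z - predict p z\<bar>}
           \<le> 2 * exp (- real N * d^2 / (2 * Ca^2))"
proof (cases "h z = 0")
  case True
  then have "particle_mixture N c z = 0" "predict p z = 0" for c
    using particle_mixture_bounds[OF N, where c=c and x=z]
      h_bracketedD(2,3)[OF h_bracketed_predict[OF p], of z]
    by simp_all
  then show ?thesis using True by simp
next
  case False
  then have hz: "0 < h z" using h_nonneg[of z] by simp
  interpret P: prob_space P unfolding P_def by (rule prob_space_PiM_density[OF p])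
  define e where "e = real N * d * h z / 2"
  have "{c \<in> space P. d / 2 * h z < \<bar>particle_mixture N c z - predict p z\<bar>}
      \<subseteq> {c \<in> space P. e \<le> \<bar>(\<Sum>i<N. a (c i) z) - real N * predict p z\<bar>}"
  proof safe
    fix c assume "d / 2 * h z < \<bar>particle_mixture N c z - predict p z\<bar>"
    moreover have "particle_mixture N c z - predict p z = ((\<Sum>i<N. a (c i) z) - real N * predict p z) / real N"
      unfolding particle_mixture_def using N by (simp add: field_simps)
    ultimately show "e \<le> \<bar>(\<Sum>i<N. a (c i) z) - real N * predict p z\<bar>"
      unfolding e_def using N by (simp add: abs_divide field_simps)
  qed
  moreover have "{c \<in> space P. e \<le> \<bar>(\<Sum>i<N. a (c i) z) - real N * predict p z\<bar>} \<in> P.events"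
    unfolding P_def by measurable (auto simp: measurable_cong_sets[OF sets_density refl] space_mu)
  ultimately have "P.prob {c \<in> space P. d / 2 * h z < \<bar>particle_mixture N c z - predict p z\<bar>}
      \<le> P.prob {c \<in> space P. e \<le> \<bar>(\<Sum>i<N. a (c i) z) - real N * predict p z\<bar>}"
    by (rule P.finite_measure_mono)
  also have "\<dots> \<le> 2 * exp (-2 * e^2 / (real N * (Ca * h z)^2))"
    unfolding P_def using hz d by (intro sum_a_components_deviation p N) (auto simp: e_def)
  also have "-2 * e^2 / (real N * (Ca * h z)^2) = - real N * d^2 / (2 * Ca^2)"
    unfolding e_def using N hz Ca_pos by (simp add: field_simps power2_eq_square)
  finally show ?thesis .
qed

lemma dist_L1_h_bracketed_le:
  assumes U: "h_bracketed U" and V: "h_bracketed V" and S: "S \<in> sets mu" and d: "0 \<le> d"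
    and close: "\<And>z. z \<notin> S \<Longrightarrow> \<bar>U z - V z\<bar> \<le> d * h z"
  shows "dist_L1 U V \<le> d + Ca * (\<integral>z. h z * indicator S z \<partial>mu)"
proof -
  have pointwise: "\<bar>U z - V z\<bar> \<le> d * h z + Ca * (h z * indicator S z)" for z
  proof (cases "z \<in> S")
    case True
    have "\<bar>U z - V z\<bar> \<le> Ca * h z"
      using h_bracketedD(2-4)[OF U, of z] h_bracketedD(2-4)[OF V, of z] by linarith
    moreover have "0 \<le> d * h z" using d h_nonneg[of z] by simp
    ultimately show ?thesis using True by simp
  qed (use close in simp)
  have iS: "integrable mu (\<lambda>z. h z * indicator S z)"
    using S h_integrable by (intro integrable_real_mult_indicator) auto
  have "dist_L1 U V \<le> (\<integral>z. d * h z + Ca * (h z * indicator S z) \<partial>mu)"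
    unfolding dist_L1_def using h_bracketed_integrable[OF U] h_bracketed_integrable[OF V]
      h_integrable iS pointwise
    by (intro integral_mono) auto
  also have "\<dots> = d + Ca * (\<integral>z. h z * indicator S z \<partial>mu)"
    using h_integrable iS h_integral by simp
  finally show ?thesis .
qed

definition deviation_bound :: "nat \<Rightarrow> real \<Rightarrow> real" where
  "deviation_bound N d = 4 * Ca / d * exp (- real N * d^2 / (2 * Ca^2))"

lemma deviation_bound_nonneg: "0 < d \<Longrightarrow> 0 \<le> deviation_bound N d"
  unfolding deviation_bound_def using Ca_pos by simp

lemma dist_L1_particle_mixture_le_mass:
  assumes p: "is_density p" and N: "1 \<le> N" and d: "0 \<le> d"
  shows "dist_L1 (particle_mixture N c) (predict p)
           \<le> d + Ca * (\<integral>z. h z * indicator {z. d * h z < \<bar>particle_mixture N c z - predict p z\<bar>} z \<partial>mu)"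
proof (rule dist_L1_h_bracketed_le[OF h_bracketed_particle_mixture[OF N] h_bracketed_predict[OF p] _ d])
  have [measurable]: "particle_mixture N c \<in> borel_measurable mu" "predict p \<in> borel_measurable mu"
    using h_bracketedD(1)[OF h_bracketed_particle_mixture[OF N]]
      predict_measurable[OF is_densityD(1)[OF p]] by auto
  have "{z \<in> space mu. d * h z < \<bar>particle_mixture N c z - predict p z\<bar>} \<in> sets mu"
    by measurable
  then show "{z. d * h z < \<bar>particle_mixture N c z - predict p z\<bar>} \<in> sets mu"
    by (simp add: space_mu)
qed auto

lemma deviation_set_measurable:
  assumes [measurable]: "g \<in> borel_measurable mu" "q \<in> borel_measurable mu"
  shows "{w \<in> space (PiM {..<N} (\<lambda>_. density mu f) \<Otimes>\<^sub>M mu).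
           g (snd w) < \<bar>particle_mixture N (fst w) (snd w) - q (snd w)\<bar>}
         \<in> sets (PiM {..<N} (\<lambda>_. density mu f) \<Otimes>\<^sub>M mu)"
proof -
  have sets_eq: "sets (PiM {..<N} (\<lambda>_. density mu f) \<Otimes>\<^sub>M mu) = sets (PiM {..<N} (\<lambda>_. mu) \<Otimes>\<^sub>M mu)"
    by (rule sets_pair_measure_cong[OF sets_PiM_density refl])
  have "(\<lambda>(c, x). particle_mixture N c x) \<in> borel_measurable (PiM {..<N} (\<lambda>_. density mu f) \<Otimes>\<^sub>M mu)"
    using particle_mixture_measurable_pair[of N] by (simp only: measurable_cong_sets[OF sets_eq refl])
  then have "(\<lambda>w. particle_mixture N (fst w) (snd w)) \<in> borel_measurable (PiM {..<N} (\<lambda>_. density mu f) \<Otimes>\<^sub>M mu)"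
    by (simp add: case_prod_beta)
  then show ?thesis by measurable
qed

text \<open>The pointwise Hoeffding bounds are integrated against \<open>h\<close> (Fubini and Markov): the set of
  points where the deviation exceeds \<open>d * h / 2\<close> has small \<open>h\<close>-mass with high probability,
  and the mixing bounds control the deviation there.\<close>

lemma particle_mixture_L1_deviation:
  assumes p: "is_density p" and N: "1 \<le> N" and d: "0 < d"
  defines "P \<equiv> PiM {..<N} (\<lambda>_. density mu (\<lambda>x. ennreal (p x)))"
  shows "measure P {c \<in> space P. d < dist_L1 (particle_mixture N c) (predict p)} \<le> deviation_bound N d"
proof -
  interpret P: prob_space P unfolding P_def by (rule prob_space_PiM_density[OF p])
  define D where "D = {w \<in> space (P \<Otimes>\<^sub>M mu).
      d / 2 * h (snd w) < \<bar>particle_mixture N (fst w) (snd w) - predict p (snd w)\<bar>}"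
  have D[measurable]: "D \<in> sets (P \<Otimes>\<^sub>M mu)"
    unfolding D_def P_def using predict_measurable[OF is_densityD(1)[OF p]]
    by (intro deviation_set_measurable) auto
  have D_section: "(c, z) \<in> D \<longleftrightarrow> d / 2 * h z < \<bar>particle_mixture N c z - predict p z\<bar>"
    if "c \<in> space P" for c z
    using that by (auto simp: D_def space_pair_measure space_mu)
  let ?mass = "\<lambda>c. \<integral>z. h z * indicator D (c, z) \<partial>mu"
  have "{c \<in> space P. d < dist_L1 (particle_mixture N c) (predict p)}
      \<subseteq> {c \<in> space P. d / (2 * Ca) \<le> ?mass c}"
  proof safe
    fix c assume c: "c \<in> space P" and far: "d < dist_L1 (particle_mixture N c) (predict p)"
    have "?mass c = (\<integral>z. h z * indicator {z. d / 2 * h z < \<bar>particle_mixture N c z - predict p z\<bar>} z \<partial>mu)"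
      by (intro Bochner_Integration.integral_cong) (auto simp: indicator_def D_section[OF c])
    then have "d < d / 2 + Ca * ?mass c"
      using far dist_L1_particle_mixture_le_mass[OF p N, of "d / 2" c] d by simp
    then show "d / (2 * Ca) \<le> ?mass c" using d Ca_pos by (simp add: field_simps)
  qed
  moreover have "(\<lambda>c. ?mass c) \<in> borel_measurable P"
    by (rule mu.borel_measurable_lebesgue_integral) measurable
  then have "{c \<in> space P. d / (2 * Ca) \<le> ?mass c} \<in> P.events" by measurable
  ultimately have "P.prob {c \<in> space P. d < dist_L1 (particle_mixture N c) (predict p)}
      \<le> P.prob {c \<in> space P. d / (2 * Ca) \<le> ?mass c}"
    by (rule P.finite_measure_mono)
  also have "\<dots> \<le> 2 * exp (- real N * d^2 / (2 * Ca^2)) / (d / (2 * Ca))"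
  proof (rule measure_section_mass_ge_le[OF P.prob_space_axioms sigma_finite D
        h_measurable h_nonneg h_integrable h_integral])
    fix z
    have "{c \<in> space P. (c, z) \<in> D} = {c \<in> space P. d / 2 * h z < \<bar>particle_mixture N c z - predict p z\<bar>}"
      using D_section by auto
    then show "P.prob {c \<in> space P. (c, z) \<in> D} \<le> 2 * exp (- real N * d^2 / (2 * Ca^2))"
      using particle_mixture_pointwise_deviation[OF p N d, of z] unfolding P_def by simp
  qed (use d Ca_pos in simp_all)
  also have "\<dots> = deviation_bound N d"
    unfolding deviation_bound_def using d Ca_pos by (simp add: field_simps)
  finally show ?thesis .
qed

lemma correct_measurable_pair:
  assumes "(\<lambda>(c, x). V c x) \<in> borel_measurable (M \<Otimes>\<^sub>M mu)"
  shows "(\<lambda>(c, x). correct n (V c) x) \<in> borel_measurable (M \<Otimes>\<^sub>M mu)"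
proof -
  have [measurable]: "(\<lambda>w. V (fst w) (snd w)) \<in> borel_measurable (M \<Otimes>\<^sub>M mu)"
    using assms by (simp add: case_prod_beta)
  have "(\<lambda>(c, z). B n z * V c z) \<in> borel_measurable (M \<Otimes>\<^sub>M mu)"
    by (simp add: case_prod_beta) measurable
  then have [measurable]: "(\<lambda>c. \<integral>z. B n z * V c z \<partial>mu) \<in> borel_measurable M"
    by (rule mu.borel_measurable_lebesgue_integral)
  have "(\<lambda>w. B n (snd w) * V (fst w) (snd w) / (\<integral>z. B n z * V (fst w) z \<partial>mu))
      \<in> borel_measurable (M \<Otimes>\<^sub>M mu)"
    by measurable
  then show ?thesis unfolding correct_def by (simp add: case_prod_beta)
qed

lemma predict_measurable_pair:
  assumes "(\<lambda>(c, x). p c x) \<in> borel_measurable (M \<Otimes>\<^sub>M mu)"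
  shows "(\<lambda>(c, x). predict (p c) x) \<in> borel_measurable (M \<Otimes>\<^sub>M mu)"
proof -
  have p: "(\<lambda>w. p (fst w) (snd w)) \<in> borel_measurable (M \<Otimes>\<^sub>M mu)"
    using assms by (simp add: case_prod_beta)
  have "(\<lambda>w. (fst (fst w), snd w)) \<in> (M \<Otimes>\<^sub>M mu) \<Otimes>\<^sub>M mu \<rightarrow>\<^sub>M M \<Otimes>\<^sub>M mu" by measurable
  from measurable_compose[OF this p]
  have "(\<lambda>w. p (fst (fst w)) (snd w) * a (snd w) (snd (fst w))) \<in> borel_measurable ((M \<Otimes>\<^sub>M mu) \<Otimes>\<^sub>M mu)"
    by (intro borel_measurable_times a_measurable) auto
  then have "(\<lambda>w. \<integral>x'. p (fst w) x' * a x' (snd w) \<partial>mu) \<in> borel_measurable (M \<Otimes>\<^sub>M mu)"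
    by (intro mu.borel_measurable_lebesgue_integral) (simp add: case_prod_beta)
  then show ?thesis unfolding predict_def by (simp add: case_prod_beta)
qed

lemma filter_iter_measurable_pair:
  assumes "(\<lambda>(c, x). p c x) \<in> borel_measurable (M \<Otimes>\<^sub>M mu)"
  shows "(\<lambda>(c, x). filter_iter s k (p c) x) \<in> borel_measurable (M \<Otimes>\<^sub>M mu)"
  by (induction k)
    (simp_all add: assms filter_step_def correct_measurable_pair predict_measurable_pair)

lemma dist_L1_measurable_pair:
  assumes "(\<lambda>(c, x). p c x) \<in> borel_measurable (M \<Otimes>\<^sub>M mu)" "q \<in> borel_measurable mu"
  shows "(\<lambda>c. dist_L1 (p c) q) \<in> borel_measurable M"
proof -
  have "(\<lambda>w. \<bar>p (fst w) (snd w) - q (snd w)\<bar>) \<in> borel_measurable (M \<Otimes>\<^sub>M mu)"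
    using assms by (simp add: case_prod_beta) measurable
  then show ?thesis
    unfolding dist_L1_def by (intro mu.borel_measurable_lebesgue_integral) (simp add: case_prod_beta)
qed

end


section \<open>The particle filter\<close>

locale particle_filter_model = mixing_filter mu a h ca Ca "\<lambda>n x. b (Suc n) x (y (Suc n))" Cb
  for mu :: "'a measure" and a h ca Ca and b :: "nat \<Rightarrow> 'a \<Rightarrow> 'b \<Rightarrow> real"
    and y :: "nat \<Rightarrow> 'b" and Cb +
  fixes a0 :: "'a \<Rightarrow> real"
  assumes is_density_a0: "is_density a0"
begin

interpretation mu: sigma_finite_measure mu by (rule sigma_finite)

abbreviation "exact_filter n \<equiv> opt_filter mu a0 a b y n"
abbreviation "mc_density N j c \<equiv> mc_filter mu a0 a b y N (Suc j) c"
abbreviation "cloud N j \<equiv> mc_particles mu a0 a b y N j"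
abbreviation "cloud_space N \<equiv> PiM {..<N} (\<lambda>_. mu)"

lemma mc_density_eq: "mc_density N j c = correct j (particle_mixture N c)"
  unfolding mc_filter_def correct_def particle_mixture_def by (simp add: Let_def fun_eq_iff)

lemma exact_filter_Suc: "exact_filter (Suc n) = filter_step n (exact_filter n)"
  unfolding filter_step_def correct_def predict_def by (simp add: Let_def fun_eq_iff)

lemma is_density_exact_filter: "is_density (exact_filter n)"
proof (induction n)
  case (Suc n)
  then show ?case unfolding exact_filter_Suc by (rule is_density_filter_step)
qed (simp add: is_density_a0)

lemma exact_filter_add: "exact_filter (s + k) = filter_iter s k (exact_filter s)"
proof (induction k)
  case (Suc k)
  then show ?case using exact_filter_Suc[of "s + k"] by simp
qed simp

lemma is_density_mc_density: "1 \<le> N \<Longrightarrow> is_density (mc_density N j c)"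
  unfolding mc_density_eq by (rule is_density_correct[OF h_bracketed_particle_mixture])

lemma mc_density_measurable_pair:
  "(\<lambda>(c, x). mc_density N j c x) \<in> borel_measurable (cloud_space N \<Otimes>\<^sub>M mu)"
  unfolding mc_density_eq by (rule correct_measurable_pair[OF particle_mixture_measurable_pair])

definition resample :: "nat \<Rightarrow> nat \<Rightarrow> (nat \<Rightarrow> 'a) \<Rightarrow> (nat \<Rightarrow> 'a) measure" where
  "resample N j c = PiM {..<N} (\<lambda>_. density mu (\<lambda>x. ennreal (mc_density N j c x)))"

lemma cloud_Suc: "cloud N (Suc j) = cloud N j \<bind> resample N j"
  by (simp add: resample_def[abs_def])

lemma prob_space_resample: "prob_space (resample N j c)"
  unfolding resample_def
proof (rule prob_space_PiM)
  fix i assume "i \<in> {..<N}"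
  then have "1 \<le> N" by simp
  then show "prob_space (density mu (\<lambda>x. ennreal (mc_density N j c x)))"
    using is_densityD[OF is_density_mc_density] by (intro prob_space_density_real) auto
qed

lemma sets_resample: "sets (resample N j c) = sets (cloud_space N)"
  unfolding resample_def by (rule sets_PiM_density)

lemma emeasure_resample_box:
  assumes N: "1 \<le> N" and E: "E \<in> (\<Pi> i\<in>{..<N}. sets mu)"
  shows "emeasure (resample N j c) (Pi\<^sub>E {..<N} E)
           = (\<Prod>i<N. \<integral>\<^sup>+x. ennreal (mc_density N j c x) * indicator (E i) x \<partial>mu)"
proof -
  interpret product_sigma_finite "\<lambda>_. density mu (\<lambda>x. ennreal (mc_density N j c x))"
    unfolding product_sigma_finite_def using is_densityD[OF is_density_mc_density[OF N]]
    by (auto intro!: prob_space_imp_sigma_finite prob_space_density_real)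
  have "emeasure (resample N j c) (Pi\<^sub>E {..<N} E)
      = (\<Prod>i<N. emeasure (density mu (\<lambda>x. ennreal (mc_density N j c x))) (E i))"
    unfolding resample_def using E by (intro emeasure_PiM) auto
  also have "\<dots> = (\<Prod>i<N. \<integral>\<^sup>+x. ennreal (mc_density N j c x) * indicator (E i) x \<partial>mu)"
    using E is_densityD(1)[OF is_density_mc_density[OF N]]
    by (intro prod.cong refl emeasure_density) auto
  finally show ?thesis .
qed

lemma resample_measurable: "resample N j \<in> cloud_space N \<rightarrow>\<^sub>M prob_algebra (cloud_space N)"
proof (rule measurable_prob_algebra_generated[OF sets_PiM Int_stable_prod_algebra
      prod_algebra_sets_into_space prob_space_resample sets_resample])
  fix X assume "X \<in> prod_algebra {..<N} (\<lambda>_. mu)"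
  then obtain E where X: "X = Pi\<^sub>E {..<N} E" and E: "E \<in> (\<Pi> i\<in>{..<N}. sets mu)"
    by (rule prod_algebraE_all)
  show "(\<lambda>c. emeasure (resample N j c) X) \<in> borel_measurable (cloud_space N)"
  proof (cases "N = 0")
    case True
    then show ?thesis by (simp add: resample_def PiM_empty)
  next
    case False
    then have N: "1 \<le> N" by simp
    have [measurable]: "E i \<in> sets mu" if "i < N" for i using E that by auto
    have "(\<lambda>w. ennreal ((\<lambda>(c, x). mc_density N j c x) w) * indicator (E i) (snd w))
        \<in> borel_measurable (cloud_space N \<Otimes>\<^sub>M mu)" if "i < N" for i
      using mc_density_measurable_pair that by measurable
    then show ?thesis
      unfolding X emeasure_resample_box[OF N E]
      by (intro borel_measurable_prod_ennreal mu.borel_measurable_nn_integral)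
        (simp_all add: case_prod_beta)
  qed
qed

lemma prob_space_sets_cloud: "prob_space (cloud N j) \<and> sets (cloud N j) = sets (cloud_space N)"
proof (induction j)
  case 0
  show ?case
    by (simp only: mc_particles.simps) (intro conjI prob_space_PiM_density is_density_a0 sets_PiM_density)
next
  case (Suc j)
  then interpret M: prob_space "cloud N j" by simp
  have "resample N j \<in> cloud N j \<rightarrow>\<^sub>M subprob_algebra (cloud_space N)"
    using measurable_prob_algebraD[OF resample_measurable] Suc
    by (simp only: measurable_cong_sets[of "cloud N j" "cloud_space N", OF _ refl])
  then show ?case unfolding cloud_Suc
    using sets_bind[OF sets_resample M.not_empty]
    by (simp add: M.prob_space_bind prob_space_resample)
qed

lemma prob_space_cloud: "prob_space (cloud N j)"
  using prob_space_sets_cloud by blast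

lemma sets_cloud: "sets (cloud N j) = sets (cloud_space N)"
  using prob_space_sets_cloud by blast

lemma space_cloud: "space (cloud N j) = space (cloud_space N)"
  using sets_cloud by (rule sets_eq_imp_space_eq)

text \<open>The \<open>L\<^sub>1\<close> error at time \<open>T\<close> of the exact filter restarted at time \<open>j + 1\<close> from the
  Monte Carlo density of the cloud \<open>c\<close> of time \<open>j\<close>; for \<open>T = j + 1\<close> this is the Monte Carlo
  error itself, and for \<open>j = T - k - 2\<close> the initial-condition error forgotten over \<open>k + 1\<close> steps.\<close>

definition propagated_error :: "nat \<Rightarrow> nat \<Rightarrow> nat \<Rightarrow> (nat \<Rightarrow> 'a) \<Rightarrow> real" where
  "propagated_error N T j c =
     dist_L1 (filter_iter (Suc j) (T - Suc j) (mc_density N j c)) (exact_filter T)"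

lemma propagated_error_measurable: "propagated_error N T j \<in> borel_measurable (cloud_space N)"
  unfolding propagated_error_def[abs_def]
  by (rule dist_L1_measurable_pair[OF filter_iter_measurable_pair[OF mc_density_measurable_pair]
        is_densityD(1)[OF is_density_exact_filter]])

lemma propagated_error_step:
  assumes N: "1 \<le> N" and T: "Suc (Suc j) \<le> T"
  shows "propagated_error N T (Suc j) c'
           \<le> propagated_error N T j c
             + lip^(T - Suc (Suc j)) * correct_lip * dist_L1 (particle_mixture N c') (predict (mc_density N j c))"
proof -
  define k where "k = T - Suc (Suc j)"
  define p where "p = filter_step (Suc j) (mc_density N j c)"
  have p: "is_density p" unfolding p_def by (intro is_density_filter_step is_density_mc_density N)
  have p': "is_density (mc_density N (Suc j) c')" by (rule is_density_mc_density[OF N])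
  have "T - Suc j = Suc k" unfolding k_def using T by simp
  then have "propagated_error N T j c = dist_L1 (filter_iter (Suc (Suc j)) k p) (exact_filter T)"
    unfolding propagated_error_def p_def by (simp only: filter_iter_Suc_shift)
  moreover have "propagated_error N T (Suc j) c'
      \<le> dist_L1 (filter_iter (Suc (Suc j)) k (mc_density N (Suc j) c')) (filter_iter (Suc (Suc j)) k p)
        + dist_L1 (filter_iter (Suc (Suc j)) k p) (exact_filter T)"
    unfolding propagated_error_def k_def
    using p p' is_density_exact_filter
    by (intro dist_L1_triangle) (auto intro: is_densityD is_density_filter_iter)
  moreover have "dist_L1 (filter_iter (Suc (Suc j)) k (mc_density N (Suc j) c')) (filter_iter (Suc (Suc j)) k p)
      \<le> lip^k * dist_L1 (mc_density N (Suc j) c') p"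
    by (rule dist_L1_filter_iter_le[OF p' p])
  moreover have "dist_L1 (mc_density N (Suc j) c') p
      \<le> correct_lip * dist_L1 (particle_mixture N c') (predict (mc_density N j c))"
    unfolding mc_density_eq[of N "Suc j"] p_def filter_step_def
    by (intro dist_L1_correct_le h_bracketed_particle_mixture N h_bracketed_predict is_density_mc_density)
  ultimately show ?thesis
    unfolding k_def using one_le_lip by (smt (verit) mult.assoc mult_left_mono zero_le_power)
qed

lemma propagated_error_init:
  assumes N: "1 \<le> N" and T: "1 \<le> T"
  shows "propagated_error N T 0 c \<le> lip^(T - 1) * correct_lip * dist_L1 (particle_mixture N c) (predict a0)"
proof -
  have "exact_filter T = filter_iter 1 (T - 1) (filter_step 0 a0)"
    using exact_filter_add[of 1 "T - 1"] exact_filter_Suc[of 0] T by simp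
  then have "propagated_error N T 0 c
      = dist_L1 (filter_iter 1 (T - 1) (mc_density N 0 c)) (filter_iter 1 (T - 1) (filter_step 0 a0))"
    unfolding propagated_error_def by simp
  also have "\<dots> \<le> lip^(T - 1) * dist_L1 (mc_density N 0 c) (filter_step 0 a0)"
    by (intro dist_L1_filter_iter_le is_density_mc_density N is_density_filter_step is_density_a0)
  also have "dist_L1 (mc_density N 0 c) (filter_step 0 a0)
      \<le> correct_lip * dist_L1 (particle_mixture N c) (predict a0)"
    unfolding mc_density_eq filter_step_def
    by (intro dist_L1_correct_le h_bracketed_particle_mixture N h_bracketed_predict is_density_a0)
  finally show ?thesis
    using one_le_lip by (smt (verit) mult.assoc mult_left_mono zero_le_power)
qed

lemma propagated_error_forget:
  assumes N: "1 \<le> N" and T: "T = Suc j + Suc k"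
  shows "propagated_error N T j c \<le> forgetting_bound k"
proof -
  have "propagated_error N T j c
      = dist_L1 (filter_iter (Suc j) (Suc k) (mc_density N j c)) (filter_iter (Suc j) (Suc k) (exact_filter (Suc j)))"
    unfolding propagated_error_def T exact_filter_add by simp
  also have "\<dots> \<le> forgetting_bound k"
    by (intro dist_L1_filter_iter_forget is_density_mc_density N is_density_exact_filter)
  finally show ?thesis .
qed

lemma deviation_event_measurable:
  assumes "q \<in> borel_measurable mu"
  shows "{c \<in> space (cloud_space N). d < dist_L1 (particle_mixture N c) q} \<in> sets (cloud_space N)"
proof -
  have "(\<lambda>c. dist_L1 (particle_mixture N c) q) \<in> borel_measurable (cloud_space N)"
    by (rule dist_L1_measurable_pair[OF particle_mixture_measurable_pair assms])
  then show ?thesis by measurable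
qed

lemma propagated_error_step_prob:
  assumes N: "1 \<le> N" and T: "Suc (Suc j) \<le> T" and d: "0 < d"
    and \<eta>: "lip^(T - Suc (Suc j)) * correct_lip * d \<le> \<eta>"
    and x: "propagated_error N T j c \<le> x"
  shows "measure (resample N j c) {c' \<in> space (cloud_space N). x + \<eta> < propagated_error N T (Suc j) c'}
           \<le> deviation_bound N d"
proof -
  define p where "p = mc_density N j c"
  define K where "K = lip^(T - Suc (Suc j)) * correct_lip"
  have p: "is_density p" unfolding p_def by (rule is_density_mc_density[OF N])
  have K: "0 < K" unfolding K_def using one_le_lip correct_lip_pos by simp
  interpret R: prob_space "resample N j c" by (rule prob_space_resample)
  have "{c' \<in> space (cloud_space N). x + \<eta> < propagated_error N T (Suc j) c'}
      \<subseteq> {c' \<in> space (cloud_space N). d < dist_L1 (particle_mixture N c') (predict p)}"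
  proof safe
    fix c' assume exceed: "x + \<eta> < propagated_error N T (Suc j) c'"
    have "propagated_error N T (Suc j) c' \<le> x + K * dist_L1 (particle_mixture N c') (predict p)"
      using propagated_error_step[OF N T, of c' c] x unfolding K_def p_def by simp
    with exceed \<eta> have "K * d < K * dist_L1 (particle_mixture N c') (predict p)"
      unfolding K_def by simp
    then show "d < dist_L1 (particle_mixture N c') (predict p)" using K by simp
  qed
  moreover have "{c' \<in> space (cloud_space N). d < dist_L1 (particle_mixture N c') (predict p)}
      \<in> sets (resample N j c)"
    unfolding sets_resample
    by (rule deviation_event_measurable[OF predict_measurable[OF is_densityD(1)[OF p]]])
  ultimately have "R.prob {c' \<in> space (cloud_space N). x + \<eta> < propagated_error N T (Suc j) c'}
      \<le> R.prob {c' \<in> space (cloud_space N). d < dist_L1 (particle_mixture N c') (predict p)}"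
    by (rule R.finite_measure_mono)
  also have "\<dots> \<le> deviation_bound N d"
    using particle_mixture_L1_deviation[OF p N d] unfolding resample_def p_def space_PiM_density .
  finally show ?thesis .
qed

text \<open>A union bound along the steps \<open>j0, \<dots>, j0 + n\<close>: every step adds at most \<open>\<eta>\<close> to the
  propagated error, except on an event of probability \<open>deviation_bound N d\<close>.\<close>

lemma propagated_error_chain:
  assumes N: "1 \<le> N" and d: "0 < d" and T: "j0 + n < T" "T \<le> j0 + k + 2"
  defines "\<eta> \<equiv> lip^k * correct_lip * d"
  shows "measure (cloud N (j0 + n)) {c \<in> space (cloud_space N). x + real n * \<eta> < propagated_error N T (j0 + n) c}
     \<le> measure (cloud N j0) {c \<in> space (cloud_space N). x < propagated_error N T j0 c}
        + real n * deviation_bound N d"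
  using T(1)
proof (induction n)
  case (Suc n)
  define j where "j = j0 + n"
  have T': "Suc (Suc j) \<le> T" using Suc.prems unfolding j_def by simp
  have "lip^(T - Suc (Suc j)) \<le> lip^k"
    using T(2) one_le_lip unfolding j_def by (intro power_increasing) auto
  then have \<eta>: "lip^(T - Suc (Suc j)) * correct_lip * d \<le> \<eta>"
    unfolding \<eta>_def using correct_lip_pos d by (intro mult_right_mono) auto
  have "measure (cloud N j \<bind> resample N j)
      {c' \<in> space (cloud_space N). (x + real n * \<eta>) + \<eta> < propagated_error N T (Suc j) c'}
      \<le> measure (cloud N j) {c \<in> space (cloud_space N). x + real n * \<eta> < propagated_error N T j c}
        + deviation_bound N d"
    by (intro measure_bind_exceed_le[OF prob_space_cloud sets_cloud resample_measurable
          propagated_error_measurable propagated_error_measurable deviation_bound_nonneg[OF d]]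
        propagated_error_step_prob[OF N T' d \<eta>])
  also have "measure (cloud N j) {c \<in> space (cloud_space N). x + real n * \<eta> < propagated_error N T j c}
      \<le> measure (cloud N j0) {c \<in> space (cloud_space N). x < propagated_error N T j0 c}
        + real n * deviation_bound N d"
    using Suc unfolding j_def by simp
  finally have "measure (cloud N j \<bind> resample N j)
      {c' \<in> space (cloud_space N). x + real (Suc n) * \<eta> < propagated_error N T (Suc j) c'}
      \<le> measure (cloud N j0) {c \<in> space (cloud_space N). x < propagated_error N T j0 c}
        + real (Suc n) * deviation_bound N d"
    by (simp add: algebra_simps)
  then show ?case
    unfolding j_def by (simp only: add_Suc_right cloud_Suc)
qed simp

lemma propagated_error_init_prob:
  assumes N: "1 \<le> N" and d: "0 < d" and T: "1 \<le> T"
    and \<eta>: "lip^(T - 1) * correct_lip * d \<le> \<eta>"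
  shows "measure (cloud N 0) {c \<in> space (cloud_space N). \<eta> < propagated_error N T 0 c}
           \<le> deviation_bound N d"
proof -
  define K where "K = lip^(T - 1) * correct_lip"
  have K: "0 < K" unfolding K_def using one_le_lip correct_lip_pos by simp
  interpret C: prob_space "cloud N 0" by (rule prob_space_cloud)
  have "{c \<in> space (cloud_space N). \<eta> < propagated_error N T 0 c}
      \<subseteq> {c \<in> space (cloud_space N). d < dist_L1 (particle_mixture N c) (predict a0)}"
  proof safe
    fix c assume "\<eta> < propagated_error N T 0 c"
    with propagated_error_init[OF N T, of c] \<eta>
    have "K * d < K * dist_L1 (particle_mixture N c) (predict a0)" unfolding K_def by simp
    then show "d < dist_L1 (particle_mixture N c) (predict a0)" using K by simp
  qed
  moreover have "{c \<in> space (cloud_space N). d < dist_L1 (particle_mixture N c) (predict a0)}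
      \<in> sets (cloud N 0)"
    unfolding sets_cloud
    by (rule deviation_event_measurable[OF predict_measurable[OF is_densityD(1)[OF is_density_a0]]])
  ultimately have "C.prob {c \<in> space (cloud_space N). \<eta> < propagated_error N T 0 c}
      \<le> C.prob {c \<in> space (cloud_space N). d < dist_L1 (particle_mixture N c) (predict a0)}"
    by (rule C.finite_measure_mono)
  also have "\<dots> \<le> deviation_bound N d"
    using particle_mixture_L1_deviation[OF is_density_a0 N d] by (simp add: space_PiM_density)
  finally show ?thesis .
qed

lemma propagated_error_exceed_mono:
  assumes "s \<le> e"
  shows "measure (cloud N j) {c \<in> space (cloud_space N). e < propagated_error N T j c}
           \<le> measure (cloud N j) {c \<in> space (cloud_space N). s < propagated_error N T j c}"
proof (rule finite_measure.finite_measure_mono)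
  show "finite_measure (cloud N j)" using prob_space_cloud by (rule prob_space.finite_measure)
  show "{c \<in> space (cloud_space N). s < propagated_error N T j c} \<in> sets (cloud N j)"
    unfolding sets_cloud using propagated_error_measurable by measurable
qed (use assms in auto)

lemma propagated_error_recent_prob:
  assumes N: "1 \<le> N" and d: "0 < d" and j: "j \<le> k"
  shows "measure (cloud N j) {c \<in> space (cloud_space N).
             real (Suc j) * (lip^k * correct_lip * d) < propagated_error N (Suc j) j c}
           \<le> real (Suc j) * deviation_bound N d"
proof -
  define \<eta> where "\<eta> = lip^k * correct_lip * d"
  have "measure (cloud N j) {c \<in> space (cloud_space N). \<eta> + real j * \<eta> < propagated_error N (Suc j) j c}
      \<le> measure (cloud N 0) {c \<in> space (cloud_space N). \<eta> < propagated_error N (Suc j) 0 c}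
        + real j * deviation_bound N d"
    using propagated_error_chain[OF N d, of 0 j "Suc j" k \<eta>] j unfolding \<eta>_def by simp
  also have "\<dots> \<le> deviation_bound N d + real j * deviation_bound N d"
    using j one_le_lip correct_lip_pos d
    by (intro add_right_mono propagated_error_init_prob[OF N d])
      (auto simp: \<eta>_def intro!: mult_right_mono power_increasing)
  finally show ?thesis unfolding \<eta>_def[symmetric] by (simp add: algebra_simps)
qed

lemma propagated_error_old_prob:
  assumes N: "1 \<le> N" and d: "0 < d" and j: "k < j"
  shows "measure (cloud N j) {c \<in> space (cloud_space N).
             forgetting_bound k + real (Suc k) * (lip^k * correct_lip * d) < propagated_error N (Suc j) j c}
           \<le> real (Suc k) * deviation_bound N d"
proof -
  define j0 where "j0 = j - Suc k"
  have j0: "j0 + Suc k = j" unfolding j0_def using j by simp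
  have "propagated_error N (Suc j) j0 c \<le> forgetting_bound k" for c
    using propagated_error_forget[OF N, of "Suc j" j0 k c] j0 by simp
  then have forgotten: "{c \<in> space (cloud_space N). forgetting_bound k < propagated_error N (Suc j) j0 c} = {}"
    by (auto simp: not_less[symmetric])
  show ?thesis
    using propagated_error_chain[OF N d, of j0 "Suc k" "Suc j" k "forgetting_bound k", unfolded j0 forgotten] j0
    by simp
qed

text \<open>After \<open>k + 1\<close> steps the initial condition is forgotten up to \<open>forgetting_bound k\<close>, so only
  the Monte Carlo errors of the last \<open>k + 1\<close> steps matter, each amplified by at most
  \<open>lip ^ k\<close>.\<close>

lemma propagated_error_tail_prob:
  assumes N: "1 \<le> N" and d: "0 < d"
    and e: "forgetting_bound k + real (Suc k) * (lip^k * correct_lip * d) \<le> e"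
  shows "measure (cloud N j) {c \<in> space (cloud_space N). e < propagated_error N (Suc j) j c}
           \<le> real (Suc k) * deviation_bound N d"
proof (cases "j \<le> k")
  case True
  have "real (Suc j) * (lip^k * correct_lip * d) \<le> real (Suc k) * (lip^k * correct_lip * d)"
    using True one_le_lip correct_lip_pos d by (intro mult_right_mono) auto
  then have "real (Suc j) * (lip^k * correct_lip * d) \<le> e"
    using e forgetting_bound_nonneg[of k] by linarith
  then have "measure (cloud N j) {c \<in> space (cloud_space N). e < propagated_error N (Suc j) j c}
      \<le> real (Suc j) * deviation_bound N d"
    by (rule order_trans[OF propagated_error_exceed_mono propagated_error_recent_prob[OF N d True]])
  also have "\<dots> \<le> real (Suc k) * deviation_bound N d"
    using True deviation_bound_nonneg[OF d] by (intro mult_right_mono) auto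
  finally show ?thesis .
next
  case False
  then have "k < j" by simp
  show ?thesis
    by (rule order_trans[OF propagated_error_exceed_mono[OF e] propagated_error_old_prob[OF N d \<open>k < j\<close>]])
qed

lemma mc_error_prob_eq:
  assumes N: "1 \<le> N" and e: "0 \<le> e"
  shows "mc_error_prob mu a0 a b y N (Suc j) e
           = measure (cloud N j) {c \<in> space (cloud_space N). e < propagated_error N (Suc j) j c}"
proof -
  have "(\<integral>\<^sup>+x. ennreal \<bar>mc_density N j c x - exact_filter (Suc j) x\<bar> \<partial>mu)
      = ennreal (propagated_error N (Suc j) j c)" for c
  proof -
    have "integrable mu (\<lambda>x. \<bar>mc_density N j c x - exact_filter (Suc j) x\<bar>)"
      by (intro integrable_abs Bochner_Integration.integrable_diff is_densityD(3)
          is_density_mc_density N is_density_exact_filter)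
    then show ?thesis
      unfolding propagated_error_def dist_L1_def
      by (simp add: nn_integral_eq_integral del: opt_filter.simps)
  qed
  then show ?thesis
    unfolding mc_error_prob_def space_cloud using e by (auto simp: ennreal_less_iff)
qed

lemma mc_error_prob_le:
  assumes d: "0 < d" and e: "forgetting_bound k + real (Suc k) * (lip^k * correct_lip * d) \<le> e"
  shows "mc_error_prob mu a0 a b y N t e
           \<le> max 1 (real (Suc k) * (4 * Ca / d)) * exp (- (d^2 / (2 * Ca^2)) * real N)"
    (is "_ \<le> ?c1 * exp (- ?c2 * real N)")
proof -
  have "0 \<le> real (Suc k) * (lip^k * correct_lip * d)"
    using one_le_lip correct_lip_pos d by simp
  then have e_nonneg: "0 \<le> e" using e forgetting_bound_nonneg[of k] by linarith
  consider (no_particles) "N = 0" | (initial) "t = 0" | (step) j where "1 \<le> N" "t = Suc j"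
  proof (cases "N = 0")
    case False
    then show thesis using that(2,3) by (cases t) auto
  qed (use that(1) in blast)
  then show ?thesis
  proof cases
    case no_particles
    interpret prob_space "cloud N (t - 1)" by (rule prob_space_cloud)
    have "mc_error_prob mu a0 a b y N t e \<le> 1" unfolding mc_error_prob_def by (rule prob_le_1)
    then show ?thesis using no_particles by simp
  next
    case initial
    then show ?thesis by (simp add: mc_error_prob_def mc_filter_def)
  next
    case step
    have "mc_error_prob mu a0 a b y N t e
        = measure (cloud N j) {c \<in> space (cloud_space N). e < propagated_error N (Suc j) j c}"
      unfolding step(2) by (rule mc_error_prob_eq[OF step(1) e_nonneg])
    also have "\<dots> \<le> real (Suc k) * deviation_bound N d"
      by (rule propagated_error_tail_prob[OF step(1) d e])
    also have "\<dots> = real (Suc k) * (4 * Ca / d) * exp (- ?c2 * real N)"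
      unfolding deviation_bound_def by (simp add: field_simps)
    also have "\<dots> \<le> ?c1 * exp (- ?c2 * real N)"
      by (intro mult_right_mono) auto
    finally show ?thesis .
  qed
qed

theorem mc_error_prob_exponential_bound:
  assumes e: "0 < e"
  shows "\<exists>c1 c2::real. 0 < c2 \<and> (\<forall>t N. mc_error_prob mu a0 a b y N t e \<le> c1 * exp (- c2 * real N))"
proof -
  obtain k where k: "forgetting_bound k < e / 2"
    using order_tendstoD(2)[OF forgetting_bound_tendsto_0, of "e / 2"] e
    by (auto simp: eventually_sequentially)
  define K where "K = real (Suc k) * (lip^k * correct_lip)"
  have K: "0 < K" unfolding K_def using one_le_lip correct_lip_pos by simp
  define d where "d = e / (2 * K)"
  have d: "0 < d" unfolding d_def using e K by simp
  have "real (Suc k) * (lip^k * correct_lip * d) = K * d" unfolding K_def by simp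
  also have "\<dots> = e / 2" unfolding d_def using K by simp
  finally have threshold: "forgetting_bound k + real (Suc k) * (lip^k * correct_lip * d) \<le> e"
    using k by simp
  show ?thesis
  proof (intro exI conjI allI)
    show "0 < d^2 / (2 * Ca^2)" using d Ca_pos by simp
    fix t N
    show "mc_error_prob mu a0 a b y N t e
        \<le> max 1 (real (Suc k) * (4 * Ca / d)) * exp (- (d^2 / (2 * Ca^2)) * real N)"
      by (rule mc_error_prob_le[OF d threshold])
  qed
qed

end


theorem theorem2:
  fixes mu :: "'a::polish_space measure" and nu :: "'b measure"
    and a0 h :: "'a \<Rightarrow> real" and a :: "'a \<Rightarrow> 'a \<Rightarrow> real"
    and b :: "nat \<Rightarrow> 'a \<Rightarrow> 'b \<Rightarrow> real" and y :: "nat \<Rightarrow> 'b"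
    and ca Ca Cb :: real
  assumes mu_borel: "sets mu = sets borel"
    and mu_sf: "sigma_finite_measure mu"
    and a0_meas: "a0 \<in> borel_measurable mu"
    and a0_nonneg: "\<And>x. a0 x \<ge> 0"
    and a0_int: "integrable mu a0" and a0_one: "(\<integral>x. a0 x \<partial>mu) = 1"
    and a_meas: "(\<lambda>(x', x). a x' x) \<in> borel_measurable (mu \<Otimes>\<^sub>M mu)"
    and a_nonneg: "\<And>x' x. a x' x \<ge> 0"
    and a_int: "\<And>x'. integrable mu (a x')"
    and a_one: "\<And>x'. (\<integral>x. a x' x \<partial>mu) = 1"
    and a_cont: "\<And>x. ((\<lambda>x'. \<integral>z. \<bar>a x' z - a x z\<bar> \<partial>mu) \<longlongrightarrow> 0) (at x)"
    and h_meas: "h \<in> borel_measurable mu"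
    and h_nonneg: "\<And>x. h x \<ge> 0"
    and h_int: "integrable mu h" and h_one: "(\<integral>x. h x \<partial>mu) = 1"
    and ca_pos: "0 < ca" and ca_Ca: "ca \<le> Ca"
    and a_bounds: "\<And>x' x. ca * h x \<le> a x' x \<and> a x' x \<le> Ca * h x"
    and b_meas: "\<And>t. t \<ge> 1 \<Longrightarrow> (\<lambda>(x, v). b t x v) \<in> borel_measurable (mu \<Otimes>\<^sub>M nu)"
    and b_int: "\<And>t x. t \<ge> 1 \<Longrightarrow> integrable nu (b t x)"
    and b_one: "\<And>t x. t \<ge> 1 \<Longrightarrow> (\<integral>v. b t x v \<partial>nu) = 1"
    and b_pos: "\<And>t x v. t \<ge> 1 \<Longrightarrow> v \<in> space nu \<Longrightarrow> b t x v > 0"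
    and b_ratio: "\<And>t x x' v. t \<ge> 1 \<Longrightarrow> v \<in> space nu \<Longrightarrow> b t x v \<le> Cb * b t x' v"
    and y_in: "\<And>t. y t \<in> space nu"
    and eps_pos: "0 < (eps::real)"
  shows "\<exists>c1 c2::real. 0 < c2 \<and>
           (\<forall>t N. mc_error_prob mu a0 a b y N t eps \<le> c1 * exp (- c2 * real N))"
proof -
  have likelihood_measurable: "(\<lambda>x. b (Suc n) x (y (Suc n))) \<in> borel_measurable mu" for n
    using measurable_compose[OF measurable_Pair2'[OF y_in] b_meas[of "Suc n"]] by simp
  interpret mixing_filter mu a h ca Ca "\<lambda>n x. b (Suc n) x (y (Suc n))" Cb
    by (intro mixing_filter.intro)
      (use mu_sf sets_eq_imp_space_eq[OF mu_borel] a_meas h_meas h_nonneg h_int h_one ca_pos ca_Ca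
        a_bounds likelihood_measurable b_pos b_ratio y_in in simp_all)
  interpret particle_filter_model mu a h ca Ca b y Cb a0
    using a0_meas a0_nonneg a0_int a0_one by unfold_locales (simp add: is_density_def)
  show ?thesis by (rule mc_error_prob_exponential_bound[OF eps_pos])
qed

end
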